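(* If a connected DGA has a nontrivial $a$-Massey product, then it is not formal.
   Context: A DGA is a graded-commutative differential graded algebra over $\mathbb R$, connected if $H^0=\mathbb R$; $|x|$ denotes degree and $\overline{x}=(-1)^{|x|}x$. Given closed $a,b_1,\dots,b_n$ with $|a|$ even and each $a\wedge b_i$ exact, the $a$-Massey product is $\langle a;b_1,\dots,b_n\rangle=\{[\sum_{i=1}^n\overline{\xi_1}\wedge\cdots\wedge\overline{\xi_{i-1}}\wedge b_i\wedge\xi_{i+1}\wedge\cdots\wedge\xi_n] : d\xi_i=a\wedge b_i\}\subset H$; it is nontrivial if it does not contain $0$. A DGA is minimal if it is free as a graded-commutative algebra on generators $\{a_\tau\}$ indexed by a well-ordered set with $|a_\mu|\le|a_\tau|$ for $\mu<\tau$ and each $da_\tau$ expressed in terms of preceding generators; a minimal model of $\mathcal A$ is a minimal DGA $\mathcal M$ with a morphism $\mathcal M\to\mathcal A$ inducing an isomorphism in cohomology; $\mathcal A$ is formal if there is a DGA morphism $\mathcal M\to H(\mathcal A)$ (with zero differential) inducing an isomorphism in cohomology. *)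

theory Defs
  imports Complex_Main
begin

text \<open>A DGA is encoded by its homogeneous pieces A^k (k an integer degree; pieces of
negative degree are zero), with degree-indexed vector space operations, a
multiplication A^k x A^l -> A^(k+l), a unit in A^0 and a differential A^k -> A^(k+1).\<close>

record 'a dga =
  dcar  :: "int \<Rightarrow> 'a set"
  dzero :: "int \<Rightarrow> 'a"
  dadd  :: "int \<Rightarrow> 'a \<Rightarrow> 'a \<Rightarrow> 'a"
  dsmul :: "int \<Rightarrow> real \<Rightarrow> 'a \<Rightarrow> 'a"
  dmul  :: "int \<Rightarrow> int \<Rightarrow> 'a \<Rightarrow> 'a \<Rightarrow> 'a"
  dunit :: "'a"
  ddiff :: "int \<Rightarrow> 'a \<Rightarrow> 'a"

definition sgn_deg :: "int \<Rightarrow> real" where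
  "sgn_deg k = (if even k then 1 else -1)"

definition is_dga :: "('a, 'b) dga_scheme \<Rightarrow> bool" where
  "is_dga A \<longleftrightarrow>
    \<comment> \<open>nonnegatively graded\<close>
    (\<forall>k<0. dcar A k = {dzero A k}) \<and>
    \<comment> \<open>each A^k is a real vector space\<close>
    (\<forall>k. dzero A k \<in> dcar A k) \<and>
    (\<forall>k. \<forall>x\<in>dcar A k. \<forall>y\<in>dcar A k. dadd A k x y \<in> dcar A k) \<and>
    (\<forall>k c. \<forall>x\<in>dcar A k. dsmul A k c x \<in> dcar A k) \<and>
    (\<forall>k. \<forall>x\<in>dcar A k. \<forall>y\<in>dcar A k. \<forall>z\<in>dcar A k.
        dadd A k (dadd A k x y) z = dadd A k x (dadd A k y z)) \<and>
    (\<forall>k. \<forall>x\<in>dcar A k. \<forall>y\<in>dcar A k. dadd A k x y = dadd A k y x) \<and>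
    (\<forall>k. \<forall>x\<in>dcar A k. dadd A k (dzero A k) x = x) \<and>
    (\<forall>k. \<forall>x\<in>dcar A k. \<exists>y\<in>dcar A k. dadd A k x y = dzero A k) \<and>
    (\<forall>k. \<forall>x\<in>dcar A k. dsmul A k 1 x = x) \<and>
    (\<forall>k c e. \<forall>x\<in>dcar A k. dsmul A k c (dsmul A k e x) = dsmul A k (c * e) x) \<and>
    (\<forall>k c e. \<forall>x\<in>dcar A k. dsmul A k (c + e) x = dadd A k (dsmul A k c x) (dsmul A k e x)) \<and>
    (\<forall>k c. \<forall>x\<in>dcar A k. \<forall>y\<in>dcar A k.
        dsmul A k c (dadd A k x y) = dadd A k (dsmul A k c x) (dsmul A k c y)) \<and>
    \<comment> \<open>bilinear, associative, unital, graded-commutative multiplication\<close>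
    (\<forall>k l. \<forall>x\<in>dcar A k. \<forall>y\<in>dcar A l. dmul A k l x y \<in> dcar A (k + l)) \<and>
    (\<forall>k l. \<forall>x\<in>dcar A k. \<forall>x'\<in>dcar A k. \<forall>y\<in>dcar A l.
        dmul A k l (dadd A k x x') y = dadd A (k + l) (dmul A k l x y) (dmul A k l x' y)) \<and>
    (\<forall>k l. \<forall>x\<in>dcar A k. \<forall>y\<in>dcar A l. \<forall>y'\<in>dcar A l.
        dmul A k l x (dadd A l y y') = dadd A (k + l) (dmul A k l x y) (dmul A k l x y')) \<and>
    (\<forall>k l c. \<forall>x\<in>dcar A k. \<forall>y\<in>dcar A l.
        dmul A k l (dsmul A k c x) y = dsmul A (k + l) c (dmul A k l x y)) \<and>
    (\<forall>k l c. \<forall>x\<in>dcar A k. \<forall>y\<in>dcar A l.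
        dmul A k l x (dsmul A l c y) = dsmul A (k + l) c (dmul A k l x y)) \<and>
    (\<forall>k l m. \<forall>x\<in>dcar A k. \<forall>y\<in>dcar A l. \<forall>z\<in>dcar A m.
        dmul A (k + l) m (dmul A k l x y) z = dmul A k (l + m) x (dmul A l m y z)) \<and>
    dunit A \<in> dcar A 0 \<and>
    (\<forall>k. \<forall>x\<in>dcar A k. dmul A 0 k (dunit A) x = x \<and> dmul A k 0 x (dunit A) = x) \<and>
    (\<forall>k l. \<forall>x\<in>dcar A k. \<forall>y\<in>dcar A l.
        dmul A k l x y = dsmul A (k + l) (sgn_deg (k * l)) (dmul A l k y x)) \<and>
    \<comment> \<open>differential: linear, of degree +1, square zero, graded Leibniz rule\<close>
    (\<forall>k. \<forall>x\<in>dcar A k. ddiff A k x \<in> dcar A (k + 1)) \<and>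
    (\<forall>k. \<forall>x\<in>dcar A k. \<forall>y\<in>dcar A k.
        ddiff A k (dadd A k x y) = dadd A (k + 1) (ddiff A k x) (ddiff A k y)) \<and>
    (\<forall>k c. \<forall>x\<in>dcar A k. ddiff A k (dsmul A k c x) = dsmul A (k + 1) c (ddiff A k x)) \<and>
    (\<forall>k. \<forall>x\<in>dcar A k. ddiff A (k + 1) (ddiff A k x) = dzero A (k + 2)) \<and>
    (\<forall>k l. \<forall>x\<in>dcar A k. \<forall>y\<in>dcar A l.
        ddiff A (k + l) (dmul A k l x y) =
          dadd A (k + l + 1) (dmul A (k + 1) l (ddiff A k x) y)
                             (dsmul A (k + l + 1) (sgn_deg k) (dmul A k (l + 1) x (ddiff A l y))))"

definition cocycles :: "('a, 'b) dga_scheme \<Rightarrow> int \<Rightarrow> 'a set" where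
  "cocycles A k = {z \<in> dcar A k. ddiff A k z = dzero A (k + 1)}"

definition coboundaries :: "('a, 'b) dga_scheme \<Rightarrow> int \<Rightarrow> 'a set" where
  "coboundaries A k = {ddiff A (k - 1) x | x. x \<in> dcar A (k - 1)}"

definition cls :: "('a, 'b) dga_scheme \<Rightarrow> int \<Rightarrow> 'a \<Rightarrow> 'a set" where
  "cls A k z = {dadd A k z b | b. b \<in> coboundaries A k}"

definition rep :: "'a set \<Rightarrow> 'a" where
  "rep X = (SOME x. x \<in> X)"

definition cohom :: "('a, 'b) dga_scheme \<Rightarrow> 'a set dga" where
  "cohom A = \<lparr> dcar = (\<lambda>k. cls A k ` cocycles A k),
               dzero = (\<lambda>k. cls A k (dzero A k)),
               dadd = (\<lambda>k X Y. cls A k (dadd A k (rep X) (rep Y))),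
               dsmul = (\<lambda>k c X. cls A k (dsmul A k c (rep X))),
               dmul = (\<lambda>k l X Y. cls A (k + l) (dmul A k l (rep X) (rep Y))),
               dunit = cls A 0 (dunit A),
               ddiff = (\<lambda>k X. cls A (k + 1) (dzero A (k + 1))) \<rparr>"

text \<open>Connected: H^0(A) = R, i.e. the degree-0 cocycles are exactly the real
multiples of the (nonzero) unit (there are no degree-0 coboundaries).\<close>
definition connected_dga :: "('a, 'b) dga_scheme \<Rightarrow> bool" where
  "connected_dga A \<longleftrightarrow> dunit A \<noteq> dzero A 0 \<and>
     (\<forall>z\<in>cocycles A 0. \<exists>c. z = dsmul A 0 c (dunit A))"

definition dga_hom :: "('a, 'c) dga_scheme \<Rightarrow> ('b, 'd) dga_scheme \<Rightarrow> (int \<Rightarrow> 'a \<Rightarrow> 'b) \<Rightarrow> bool" where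
  "dga_hom M A f \<longleftrightarrow>
    (\<forall>k. \<forall>x\<in>dcar M k. f k x \<in> dcar A k) \<and>
    (\<forall>k. \<forall>x\<in>dcar M k. \<forall>y\<in>dcar M k. f k (dadd M k x y) = dadd A k (f k x) (f k y)) \<and>
    (\<forall>k c. \<forall>x\<in>dcar M k. f k (dsmul M k c x) = dsmul A k c (f k x)) \<and>
    (\<forall>k l. \<forall>x\<in>dcar M k. \<forall>y\<in>dcar M l.
        f (k + l) (dmul M k l x y) = dmul A k l (f k x) (f l y)) \<and>
    f 0 (dunit M) = dunit A \<and>
    (\<forall>k. \<forall>x\<in>dcar M k. f (k + 1) (ddiff M k x) = ddiff A k (f k x))"

text \<open>A morphism induces an isomorphism in cohomology (in every degree):
injectivity and surjectivity of the induced map H^k(M) -> H^k(A).\<close>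
definition quasi_iso :: "('a, 'c) dga_scheme \<Rightarrow> ('b, 'd) dga_scheme \<Rightarrow> (int \<Rightarrow> 'a \<Rightarrow> 'b) \<Rightarrow> bool" where
  "quasi_iso M A f \<longleftrightarrow>
    (\<forall>k. \<forall>z\<in>cocycles M k. f k z \<in> coboundaries A k \<longrightarrow> z \<in> coboundaries M k) \<and>
    (\<forall>k. \<forall>w\<in>cocycles A k. \<exists>z\<in>cocycles M k. \<exists>b\<in>coboundaries A k. w = dadd A k (f k z) b)"

primrec prodl :: "('a, 'b) dga_scheme \<Rightarrow> (int \<times> 'a) list \<Rightarrow> int \<times> 'a" where
  "prodl A [] = (0, dunit A)"
| "prodl A (kx # xs) =
     (fst kx + fst (prodl A xs), dmul A (fst kx) (fst (prodl A xs)) (snd kx) (snd (prodl A xs)))"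

definition lcomb :: "('a, 'b) dga_scheme \<Rightarrow> int \<Rightarrow> (real \<times> (int \<times> 'a) list) list \<Rightarrow> 'a" where
  "lcomb A k ts = foldr (\<lambda>cm acc. dadd A k (dsmul A k (fst cm) (snd (prodl A (snd cm)))) acc) ts (dzero A k)"

definition gen_span :: "('a, 'b) dga_scheme \<Rightarrow> int \<Rightarrow> (int \<times> 'a) set \<Rightarrow> 'a set" where
  "gen_span A k S = {y. \<exists>ts. (\<forall>cm\<in>set ts. set (snd cm) \<subseteq> S \<and> fst (prodl A (snd cm)) = k)
                            \<and> y = lcomb A k ts}"

definition std_mono :: "(int \<times> 'a) set \<Rightarrow> ((int \<times> 'a) \<times> (int \<times> 'a)) set \<Rightarrow> (int \<times> 'a) list \<Rightarrow> bool" where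
  "std_mono G r m \<longleftrightarrow> set m \<subseteq> G \<and> sorted_wrt (\<lambda>x y. (x, y) \<in> r \<and> (x = y \<longrightarrow> even (fst x))) m"

text \<open>M is the free graded-commutative algebra on the generators G: in each degree
the standard monomials form a basis.\<close>
definition free_gc_on :: "('a, 'b) dga_scheme \<Rightarrow> (int \<times> 'a) set \<Rightarrow> ((int \<times> 'a) \<times> (int \<times> 'a)) set \<Rightarrow> bool" where
  "free_gc_on M G r \<longleftrightarrow>
    (\<forall>k. \<forall>x\<in>dcar M k. \<exists>ts. (\<forall>cm\<in>set ts. std_mono G r (snd cm) \<and> fst (prodl M (snd cm)) = k)
                            \<and> x = lcomb M k ts) \<and>
    (\<forall>k ts. distinct (map snd ts) \<and> (\<forall>cm\<in>set ts. std_mono G r (snd cm) \<and> fst (prodl M (snd cm)) = k)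
            \<and> lcomb M k ts = dzero M k \<longrightarrow> (\<forall>cm\<in>set ts. fst cm = 0))"

text \<open>Minimal DGA: free graded-commutative on generators a_tau (recorded as pairs
(degree, element)) indexed by a well-ordered set, degrees nondecreasing along the
order, and each d a_tau lying in the subalgebra generated by the preceding generators.\<close>
definition minimal_dga :: "('a, 'b) dga_scheme \<Rightarrow> bool" where
  "minimal_dga M \<longleftrightarrow> is_dga M \<and>
    (\<exists>G r. Well_order r \<and> Field r = G \<and>
       (\<forall>g\<in>G. snd g \<in> dcar M (fst g)) \<and>
       (\<forall>\<mu> \<tau>. (\<mu>, \<tau>) \<in> r \<longrightarrow> fst \<mu> \<le> fst \<tau>) \<and>
       (\<forall>\<tau>\<in>G. ddiff M (fst \<tau>) (snd \<tau>) \<in> gen_span M (fst \<tau> + 1) {\<mu>. (\<mu>, \<tau>) \<in> r \<and> \<mu> \<noteq> \<tau>}) \<and>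
       free_gc_on M G r)"

definition minimal_model :: "('m, 'c) dga_scheme \<Rightarrow> ('a, 'b) dga_scheme \<Rightarrow> (int \<Rightarrow> 'm \<Rightarrow> 'a) \<Rightarrow> bool" where
  "minimal_model M A f \<longleftrightarrow> minimal_dga M \<and> dga_hom M A f \<and> quasi_iso M A f"

text \<open>Formality, with the minimal model taken from the carrier type 'm.
(HOL cannot quantify over types inside a formula; a theorem with the free type
variable 'm asserts the claim for every carrier type.)\<close>
definition formal :: "'m itself \<Rightarrow> ('a, 'b) dga_scheme \<Rightarrow> bool" where
  "formal (_ :: 'm itself) A \<longleftrightarrow>
     (\<exists>(M :: 'm dga) f g. minimal_model M A f \<and> dga_hom M (cohom A) g \<and> quasi_iso M (cohom A) g)"

definition bar :: "('a, 'b) dga_scheme \<Rightarrow> int \<Rightarrow> 'a \<Rightarrow> 'a" where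
  "bar A k x = dsmul A k (sgn_deg k) x"

definition massey_data :: "('a, 'b) dga_scheme \<Rightarrow> int \<Rightarrow> 'a \<Rightarrow> nat \<Rightarrow> (nat \<Rightarrow> int) \<Rightarrow> (nat \<Rightarrow> 'a) \<Rightarrow> bool" where
  "massey_data A p a n q b \<longleftrightarrow> even p \<and> a \<in> cocycles A p \<and>
     (\<forall>i\<in>{1..n}. b i \<in> cocycles A (q i) \<and> dmul A p (q i) a (b i) \<in> coboundaries A (p + q i))"

definition massey_deg :: "int \<Rightarrow> nat \<Rightarrow> (nat \<Rightarrow> int) \<Rightarrow> int" where
  "massey_deg p n q = (int n - 1) * (p - 1) + (\<Sum>j = 1..n. q j)"

definition massey_term :: "('a, 'b) dga_scheme \<Rightarrow> int \<Rightarrow> nat \<Rightarrow> (nat \<Rightarrow> int) \<Rightarrow> (nat \<Rightarrow> 'a) \<Rightarrow> (nat \<Rightarrow> 'a) \<Rightarrow> nat \<Rightarrow> 'a" where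
  "massey_term A p n q b \<xi> i = snd (prodl A
      (map (\<lambda>j. (p + q j - 1, bar A (p + q j - 1) (\<xi> j))) [1..<i]
       @ [(q i, b i)]
       @ map (\<lambda>j. (p + q j - 1, \<xi> j)) [Suc i..<Suc n]))"

definition massey_sum :: "('a, 'b) dga_scheme \<Rightarrow> int \<Rightarrow> nat \<Rightarrow> (nat \<Rightarrow> int) \<Rightarrow> (nat \<Rightarrow> 'a) \<Rightarrow> (nat \<Rightarrow> 'a) \<Rightarrow> 'a" where
  "massey_sum A p n q b \<xi> =
     foldr (\<lambda>i acc. dadd A (massey_deg p n q) (massey_term A p n q b \<xi> i) acc) [1..<Suc n]
           (dzero A (massey_deg p n q))"

definition massey :: "('a, 'b) dga_scheme \<Rightarrow> int \<Rightarrow> 'a \<Rightarrow> nat \<Rightarrow> (nat \<Rightarrow> int) \<Rightarrow> (nat \<Rightarrow> 'a) \<Rightarrow> 'a set set" where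
  "massey A p a n q b =
     {cls A (massey_deg p n q) (massey_sum A p n q b \<xi>) | \<xi>.
        \<forall>i\<in>{1..n}. \<xi> i \<in> dcar A (p + q i - 1) \<and> ddiff A (p + q i - 1) (\<xi> i) = dmul A p (q i) a (b i)}"

definition nontrivial_massey :: "('a, 'b) dga_scheme \<Rightarrow> int \<Rightarrow> 'a \<Rightarrow> nat \<Rightarrow> (nat \<Rightarrow> int) \<Rightarrow> (nat \<Rightarrow> 'a) \<Rightarrow> bool" where
  "nontrivial_massey A p a n q b \<longleftrightarrow> dzero (cohom A) (massey_deg p n q) \<notin> massey A p a n q b"

end

theory Submission
  imports Defs
begin

text \<open>Suppose \<open>A\<close> is formal, with minimal model \<open>f : M \<rightarrow> A\<close> and a quasi-isomorphism
  \<open>g : M \<rightarrow> H(A)\<close>. Lift \<open>a\<close> and the \<open>b\<^sub>i\<close> along \<open>f\<close> to cocycles \<open>a'\<close>, \<open>b'\<^sub>i\<close> of \<open>M\<close>. As \<open>f\<close> is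
  injective in cohomology, the products \<open>a' b'\<^sub>i\<close> are exact, and as \<open>g\<close> is surjective in
  cohomology their primitives \<open>\<xi>\<^sub>i\<close> can be chosen with \<open>g \<xi>\<^sub>i = 0\<close> in \<open>H(A)\<close>. The resulting
  Massey sum in \<open>M\<close> is a cocycle whose image under \<open>g\<close> vanishes, each of its summands containing
  some \<open>\<xi>\<^sub>i\<close> because \<open>n \<ge> 2\<close>; so it is exact. Its image under \<open>f\<close> is an exact Massey sum for
  \<open>f a'\<close> and the \<open>f b'\<^sub>i\<close>, and moving \<open>a\<close> and the \<open>b\<^sub>i\<close> within their classes changes the Massey sum
  only by a coboundary, so \<open>\<langle>a; b\<^sub>1, \<dots>, b\<^sub>n\<rangle>\<close> contains \<open>0\<close>.\<close>

lemma sgn_deg_even [simp]: "even k \<Longrightarrow> sgn_deg k = 1"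
  and sgn_deg_odd [simp]: "odd k \<Longrightarrow> sgn_deg k = -1"
  by (simp_all add: sgn_deg_def)

lemma sgn_deg_add: "sgn_deg (k + l) = sgn_deg k * sgn_deg l"
  by (auto simp: sgn_deg_def)

lemma sgn_deg_sq [simp]: "sgn_deg k * sgn_deg k = 1"
  by (auto simp: sgn_deg_def)

lemma sgn_deg_mult: "sgn_deg (k * l) = (if even k \<or> even l then 1 else -1)"
  by (auto simp: sgn_deg_def)

section \<open>Elementary algebra in a DGA\<close>

locale dg_algebra =
  fixes A :: "('a, 'b) dga_scheme"
  assumes neg_deg_law: "\<forall>k<0. dcar A k = {dzero A k}"
    and zero_law: "\<forall>k. dzero A k \<in> dcar A k"
    and add_closed_law: "\<forall>k. \<forall>x\<in>dcar A k. \<forall>y\<in>dcar A k. dadd A k x y \<in> dcar A k"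
    and smul_closed_law: "\<forall>k c. \<forall>x\<in>dcar A k. dsmul A k c x \<in> dcar A k"
    and add_assoc_law: "\<forall>k. \<forall>x\<in>dcar A k. \<forall>y\<in>dcar A k. \<forall>z\<in>dcar A k.
      dadd A k (dadd A k x y) z = dadd A k x (dadd A k y z)"
    and add_comm_law: "\<forall>k. \<forall>x\<in>dcar A k. \<forall>y\<in>dcar A k. dadd A k x y = dadd A k y x"
    and add_zero_law: "\<forall>k. \<forall>x\<in>dcar A k. dadd A k (dzero A k) x = x"
    and add_inverse_law: "\<forall>k. \<forall>x\<in>dcar A k. \<exists>y\<in>dcar A k. dadd A k x y = dzero A k"
    and smul_one_law: "\<forall>k. \<forall>x\<in>dcar A k. dsmul A k 1 x = x"
    and smul_smul_law: "\<forall>k c e. \<forall>x\<in>dcar A k. dsmul A k c (dsmul A k e x) = dsmul A k (c * e) x"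
    and smul_add_scalar_law: "\<forall>k c e. \<forall>x\<in>dcar A k.
      dsmul A k (c + e) x = dadd A k (dsmul A k c x) (dsmul A k e x)"
    and smul_add_law: "\<forall>k c. \<forall>x\<in>dcar A k. \<forall>y\<in>dcar A k.
      dsmul A k c (dadd A k x y) = dadd A k (dsmul A k c x) (dsmul A k c y)"
    and mul_closed_law: "\<forall>k l. \<forall>x\<in>dcar A k. \<forall>y\<in>dcar A l. dmul A k l x y \<in> dcar A (k + l)"
    and mul_add_left_law: "\<forall>k l. \<forall>x\<in>dcar A k. \<forall>x'\<in>dcar A k. \<forall>y\<in>dcar A l.
      dmul A k l (dadd A k x x') y = dadd A (k + l) (dmul A k l x y) (dmul A k l x' y)"
    and mul_add_right_law: "\<forall>k l. \<forall>x\<in>dcar A k. \<forall>y\<in>dcar A l. \<forall>y'\<in>dcar A l.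
      dmul A k l x (dadd A l y y') = dadd A (k + l) (dmul A k l x y) (dmul A k l x y')"
    and mul_smul_left_law: "\<forall>k l c. \<forall>x\<in>dcar A k. \<forall>y\<in>dcar A l.
      dmul A k l (dsmul A k c x) y = dsmul A (k + l) c (dmul A k l x y)"
    and mul_smul_right_law: "\<forall>k l c. \<forall>x\<in>dcar A k. \<forall>y\<in>dcar A l.
      dmul A k l x (dsmul A l c y) = dsmul A (k + l) c (dmul A k l x y)"
    and mul_assoc_law: "\<forall>k l m. \<forall>x\<in>dcar A k. \<forall>y\<in>dcar A l. \<forall>z\<in>dcar A m.
      dmul A (k + l) m (dmul A k l x y) z = dmul A k (l + m) x (dmul A l m y z)"
    and unit_law: "dunit A \<in> dcar A 0"
    and unit_mul_law: "\<forall>k. \<forall>x\<in>dcar A k. dmul A 0 k (dunit A) x = x \<and> dmul A k 0 x (dunit A) = x"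
    and mul_comm_law: "\<forall>k l. \<forall>x\<in>dcar A k. \<forall>y\<in>dcar A l.
      dmul A k l x y = dsmul A (k + l) (sgn_deg (k * l)) (dmul A l k y x)"
    and d_closed_law: "\<forall>k. \<forall>x\<in>dcar A k. ddiff A k x \<in> dcar A (k + 1)"
    and d_add_law: "\<forall>k. \<forall>x\<in>dcar A k. \<forall>y\<in>dcar A k.
      ddiff A k (dadd A k x y) = dadd A (k + 1) (ddiff A k x) (ddiff A k y)"
    and d_smul_law: "\<forall>k c. \<forall>x\<in>dcar A k. ddiff A k (dsmul A k c x) = dsmul A (k + 1) c (ddiff A k x)"
    and d_d_law: "\<forall>k. \<forall>x\<in>dcar A k. ddiff A (k + 1) (ddiff A k x) = dzero A (k + 2)"
    and leibniz_law: "\<forall>k l. \<forall>x\<in>dcar A k. \<forall>y\<in>dcar A l.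
      ddiff A (k + l) (dmul A k l x y) = dadd A (k + l + 1) (dmul A (k + 1) l (ddiff A k x) y)
        (dsmul A (k + l + 1) (sgn_deg k) (dmul A k (l + 1) x (ddiff A l y)))"

lemma dg_algebra_iff_is_dga: "dg_algebra A \<longleftrightarrow> is_dga A"
  unfolding dg_algebra_def is_dga_def by (simp only: conj_assoc)

context dg_algebra
begin

abbreviation "C \<equiv> dcar A"
abbreviation "ad \<equiv> dadd A"
abbreviation "sm \<equiv> dsmul A"
abbreviation "mu \<equiv> dmul A"
abbreviation "z0 \<equiv> dzero A"
abbreviation "dd \<equiv> ddiff A"
abbreviation "one \<equiv> dunit A"

lemma zero_C [simp]: "z0 k \<in> C k"
  using zero_law by blast
lemma add_C [intro, simp]: "x \<in> C k \<Longrightarrow> y \<in> C k \<Longrightarrow> ad k x y \<in> C k"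
  using add_closed_law by blast
lemma smul_C [intro, simp]: "x \<in> C k \<Longrightarrow> sm k c x \<in> C k"
  using smul_closed_law by blast
lemma add_assoc: "x \<in> C k \<Longrightarrow> y \<in> C k \<Longrightarrow> z \<in> C k \<Longrightarrow> ad k (ad k x y) z = ad k x (ad k y z)"
  using add_assoc_law by blast
lemma add_comm: "x \<in> C k \<Longrightarrow> y \<in> C k \<Longrightarrow> ad k x y = ad k y x"
  using add_comm_law by blast
lemma add_zero_left [simp]: "x \<in> C k \<Longrightarrow> ad k (z0 k) x = x"
  using add_zero_law by blast
lemma add_inverse_exists: "x \<in> C k \<Longrightarrow> \<exists>y\<in>C k. ad k x y = z0 k"
  using add_inverse_law by blast
lemma smul_one [simp]: "x \<in> C k \<Longrightarrow> sm k 1 x = x"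
  using smul_one_law by blast
lemma smul_smul [simp]: "x \<in> C k \<Longrightarrow> sm k c (sm k e x) = sm k (c * e) x"
  using smul_smul_law by blast
lemma smul_add_scalar: "x \<in> C k \<Longrightarrow> sm k (c + e) x = ad k (sm k c x) (sm k e x)"
  using smul_add_scalar_law by blast
lemma smul_add: "x \<in> C k \<Longrightarrow> y \<in> C k \<Longrightarrow> sm k c (ad k x y) = ad k (sm k c x) (sm k c y)"
  using smul_add_law by blast
lemma mul_closed: "x \<in> C k \<Longrightarrow> y \<in> C l \<Longrightarrow> mu k l x y \<in> C (k + l)"
  using mul_closed_law by blast
lemma mul_add_left: "x \<in> C k \<Longrightarrow> x' \<in> C k \<Longrightarrow> y \<in> C l \<Longrightarrow>
    mu k l (ad k x x') y = ad (k + l) (mu k l x y) (mu k l x' y)"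
  using mul_add_left_law by blast
lemma mul_add_right: "x \<in> C k \<Longrightarrow> y \<in> C l \<Longrightarrow> y' \<in> C l \<Longrightarrow>
    mu k l x (ad l y y') = ad (k + l) (mu k l x y) (mu k l x y')"
  using mul_add_right_law by blast
lemma mul_smul_left: "x \<in> C k \<Longrightarrow> y \<in> C l \<Longrightarrow> mu k l (sm k c x) y = sm (k + l) c (mu k l x y)"
  using mul_smul_left_law by blast
lemma mul_smul_right: "x \<in> C k \<Longrightarrow> y \<in> C l \<Longrightarrow> mu k l x (sm l c y) = sm (k + l) c (mu k l x y)"
  using mul_smul_right_law by blast
lemma mul_assoc': "x \<in> C k \<Longrightarrow> y \<in> C l \<Longrightarrow> z \<in> C m \<Longrightarrow>
    mu (k + l) m (mu k l x y) z = mu k (l + m) x (mu l m y z)"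
  using mul_assoc_law by blast
lemma unit_C [simp]: "one \<in> C 0"
  by (fact unit_law)
lemma unit_left [simp]: "x \<in> C k \<Longrightarrow> mu 0 k one x = x"
  and unit_right [simp]: "x \<in> C k \<Longrightarrow> mu k 0 x one = x"
  using unit_mul_law by blast+
lemma mul_comm': "x \<in> C k \<Longrightarrow> y \<in> C l \<Longrightarrow> mu k l x y = sm (k + l) (sgn_deg (k * l)) (mu l k y x)"
  using mul_comm_law by blast
lemma d_closed: "x \<in> C k \<Longrightarrow> dd k x \<in> C (k + 1)"
  using d_closed_law by blast
lemma d_add: "x \<in> C k \<Longrightarrow> y \<in> C k \<Longrightarrow> dd k (ad k x y) = ad (k + 1) (dd k x) (dd k y)"
  using d_add_law by blast
lemma d_smul: "x \<in> C k \<Longrightarrow> dd k (sm k c x) = sm (k + 1) c (dd k x)"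
  using d_smul_law by blast
lemma d_d: "x \<in> C k \<Longrightarrow> dd (k + 1) (dd k x) = z0 (k + 2)"
  using d_d_law by blast
lemma leibniz': "x \<in> C k \<Longrightarrow> y \<in> C l \<Longrightarrow> dd (k + l) (mu k l x y) =
    ad (k + l + 1) (mu (k + 1) l (dd k x) y) (sm (k + l + 1) (sgn_deg k) (mu k (l + 1) x (dd l y)))"
  using leibniz_law by blast

text \<open>Variants in which the degree of the result is a variable constrained by an equation, so
  that they apply to degree expressions that agree only up to arithmetic.\<close>

lemma mul_C [intro, simp]: "x \<in> C k \<Longrightarrow> y \<in> C l \<Longrightarrow> k + l = m \<Longrightarrow> mu k l x y \<in> C m"
  using mul_closed by blast

lemma d_C [intro, simp]: "x \<in> C k \<Longrightarrow> k + 1 = m \<Longrightarrow> dd k x \<in> C m"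
  using d_closed by blast

lemma mul_assoc: "x \<in> C k \<Longrightarrow> y \<in> C l \<Longrightarrow> z \<in> C m \<Longrightarrow> kl = k + l \<Longrightarrow> lm = l + m \<Longrightarrow>
    mu kl m (mu k l x y) z = mu k lm x (mu l m y z)"
  using mul_assoc'[of x k y l z m] by simp

lemma mul_comm: "x \<in> C k \<Longrightarrow> y \<in> C l \<Longrightarrow> m = k + l \<Longrightarrow>
    mu k l x y = sm m (sgn_deg (k * l)) (mu l k y x)"
  using mul_comm'[of x k y l] by simp

lemma mul_add_left_deg: "x \<in> C k \<Longrightarrow> x' \<in> C k \<Longrightarrow> y \<in> C l \<Longrightarrow> m = k + l \<Longrightarrow>
    mu k l (ad k x x') y = ad m (mu k l x y) (mu k l x' y)"
  using mul_add_left[of x k x' y l] by simp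

lemma mul_add_right_deg: "x \<in> C k \<Longrightarrow> y \<in> C l \<Longrightarrow> y' \<in> C l \<Longrightarrow> m = k + l \<Longrightarrow>
    mu k l x (ad l y y') = ad m (mu k l x y) (mu k l x y')"
  using mul_add_right[of x k y l y'] by simp

lemma mul_smul_left_deg: "x \<in> C k \<Longrightarrow> y \<in> C l \<Longrightarrow> m = k + l \<Longrightarrow>
    mu k l (sm k c x) y = sm m c (mu k l x y)"
  using mul_smul_left[of x k y l c] by simp

lemma d_add_deg: "x \<in> C k \<Longrightarrow> y \<in> C k \<Longrightarrow> m = k + 1 \<Longrightarrow>
    dd k (ad k x y) = ad m (dd k x) (dd k y)"
  using d_add[of x k y] by simp

lemma d_smul_deg: "x \<in> C k \<Longrightarrow> m = k + 1 \<Longrightarrow> dd k (sm k c x) = sm m c (dd k x)"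
  using d_smul[of x k c] by simp

lemma leibniz: "x \<in> C k \<Longrightarrow> y \<in> C l \<Longrightarrow> m = k + l \<Longrightarrow> m1 = k + l + 1 \<Longrightarrow>
    k1 = k + 1 \<Longrightarrow> l1 = l + 1 \<Longrightarrow>
    dd m (mu k l x y) = ad m1 (mu k1 l (dd k x) y) (sm m1 (sgn_deg k) (mu k l1 x (dd l y)))"
  using leibniz'[of x k y l] by simp

lemma add_zero_right [simp]: "x \<in> C k \<Longrightarrow> ad k x (z0 k) = x"
  using add_comm[of x k "z0 k"] by simp

lemma add_left_commute: "x \<in> C k \<Longrightarrow> y \<in> C k \<Longrightarrow> z \<in> C k \<Longrightarrow>
    ad k x (ad k y z) = ad k y (ad k x z)"
  using add_assoc[of x k y z] add_assoc[of y k x z] add_comm[of x k y] by simp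

lemma add_cancel_left:
  assumes x: "x \<in> C k" and y: "y \<in> C k" and z: "z \<in> C k" and eq: "ad k x y = ad k x z"
  shows "y = z"
proof -
  obtain x' where x': "x' \<in> C k" "ad k x x' = z0 k" using add_inverse_exists[OF x] by blast
  have "y = ad k (ad k x' x) y" using x x' y by (simp add: add_comm)
  also have "\<dots> = ad k x' (ad k x z)" using x x' y eq by (simp add: add_assoc)
  also have "\<dots> = z" using x x' z by (simp add: add_assoc[symmetric] add_comm)
  finally show ?thesis .
qed

lemma add_idem_imp_zero: "x \<in> C k \<Longrightarrow> ad k x x = x \<Longrightarrow> x = z0 k"
  by (rule add_cancel_left[of x k x "z0 k"]) auto

lemma smul_zero [simp]: "x \<in> C k \<Longrightarrow> sm k 0 x = z0 k"
  by (rule add_idem_imp_zero) (auto simp: smul_add_scalar[symmetric])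

lemma smul_zero_right [simp]: "sm k c (z0 k) = z0 k"
  using smul_smul[of "z0 k" k c 0] by simp

lemma add_neg [simp]: "x \<in> C k \<Longrightarrow> ad k x (sm k (-1) x) = z0 k"
  using smul_add_scalar[of x k 1 "-1"] by simp

lemma smul_cancel: "u \<in> C k \<Longrightarrow> ad k (sm k c u) (sm k (-c) u) = z0 k"
  using smul_add_scalar[of u k c "-c"] by simp

lemma add_neg_cancel_left: "x \<in> C k \<Longrightarrow> w \<in> C k \<Longrightarrow> ad k x (ad k (sm k (-1) x) w) = w"
  by (simp add: add_assoc[symmetric])

lemma add_rearrange_6:
  "u1 \<in> C k \<Longrightarrow> u2 \<in> C k \<Longrightarrow> u3 \<in> C k \<Longrightarrow> u4 \<in> C k \<Longrightarrow> u5 \<in> C k \<Longrightarrow> u6 \<in> C k \<Longrightarrow>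
    ad k (ad k (ad k u1 u2) u3) (ad k (ad k u4 u5) u6) =
    ad k (ad k u1 u4) (ad k (ad k u2 u5) (ad k u3 u6))"
  by (simp add: add_assoc add_comm add_left_commute)

lemma mul_zero_left [simp]: "y \<in> C l \<Longrightarrow> mu k l (z0 k) y = z0 (k + l)"
  using mul_smul_left[of "z0 k" k y l 0] by (simp add: mul_closed)

lemma mul_zero_right [simp]: "x \<in> C k \<Longrightarrow> mu k l x (z0 l) = z0 (k + l)"
  using mul_smul_right[of x k "z0 l" l 0] by (simp add: mul_closed)

lemma d_zero [simp]: "dd k (z0 k) = z0 (k + 1)"
  using d_smul[of "z0 k" k 0] by (simp add: d_closed)

lemma d_unit [simp]: "dd 0 one = z0 1"
proof -
  have "dd 0 one = dd (0 + 0) (mu 0 0 one one)" by simp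
  also have "\<dots> = ad 1 (dd 0 one) (dd 0 one)"
    using leibniz'[of one 0 one 0] d_closed[of one 0] by simp
  finally show ?thesis using add_idem_imp_zero[of "dd 0 one" 1] d_closed[of one 0] by simp
qed

lemma eq_neg_self_imp_zero:
  assumes u: "u \<in> C k" and eq: "u = sm k (-1) u"
  shows "u = z0 k"
proof -
  have "sm k 2 u = z0 k" using add_neg[OF u] eq[symmetric] u smul_add_scalar[of u k 1 1] by simp
  hence "sm k (1/2) (sm k 2 u) = z0 k" by simp
  thus ?thesis using u by simp
qed

lemma odd_square_zero:
  assumes g: "odd g" and c: "c \<in> C g"
  shows "mu g g c c = z0 (g + g)"
proof (rule eq_neg_self_imp_zero)
  show "mu g g c c \<in> C (g + g)" using c by simp
  show "mu g g c c = sm (g + g) (-1) (mu g g c c)"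
    using mul_comm'[OF c c] g by (simp add: sgn_deg_mult)
qed

lemma mul_comm_even:
  assumes p: "even p" and a: "a \<in> C p" and x: "x \<in> C E"
  shows "mu E p x a = mu p E a x"
proof -
  have "mu E p x a = sm (E + p) (sgn_deg (E * p)) (mu p E a x)" using x a by (rule mul_comm')
  also have "\<dots> = mu p E a x" using p a x by (simp add: sgn_deg_mult add.commute mul_closed)
  finally show ?thesis .
qed

lemma mul_left_commute_odd:
  assumes g: "odd g" and x: "x \<in> C E" and c: "c \<in> C g" and S: "S \<in> C Sd"
  shows "mu E (g + Sd) x (mu g Sd c S) = mu g (E + Sd) c (mu E Sd (sm E (sgn_deg E) x) S)"
proof -
  have "mu E (g + Sd) x (mu g Sd c S) = mu (E + g) Sd (mu E g x c) S"
    using x c S by (simp add: mul_assoc)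
  also have "\<dots> = sm (E + g + Sd) (sgn_deg (E * g)) (mu (E + g) Sd (mu g E c x) S)"
    using x c S by (simp add: mul_comm[of x E c g "E + g"] mul_smul_left_deg)
  also have "\<dots> = sm (E + g + Sd) (sgn_deg E) (mu g (E + Sd) c (mu E Sd x S))"
    using x c S g by (subst mul_assoc) (auto simp: sgn_deg_mult sgn_deg_def)
  also have "\<dots> = mu g (E + Sd) c (mu E Sd (sm E (sgn_deg E) x) S)"
    using x c S by (simp add: mul_smul_left mul_smul_right mul_closed ac_simps)
  finally show ?thesis .
qed

lemma mul_odd_factor_twice:
  assumes g: "odd g" and c: "c \<in> C g" and y: "y \<in> C Q" and S: "S \<in> C Sv"
  shows "mu (g + Q) (g + Sv) (mu g Q c y) (mu g Sv c S) = z0 (g + Q + (g + Sv))"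
proof -
  have "mu (g + Q) (g + Sv) (mu g Q c y) (mu g Sv c S) = mu g (Q + (g + Sv)) c
      (mu Q (g + Sv) y (mu g Sv c S))"
    using c y S by (simp add: mul_assoc)
  also have "mu Q (g + Sv) y (mu g Sv c S) = mu (Q + g) Sv (mu Q g y c) S"
    using c y S by (simp add: mul_assoc)
  also have "mu Q g y c = sm (Q + g) (sgn_deg (Q * g)) (mu g Q c y)"
    using c y by (simp add: mul_comm[of y Q c g "Q + g"])
  also have "mu (Q + g) Sv (sm (Q + g) (sgn_deg (Q * g)) (mu g Q c y)) S
     = sm (Q + g + Sv) (sgn_deg (Q * g)) (mu g (Q + Sv) c (mu Q Sv y S))"
    using c y S by (simp add: mul_smul_left mul_assoc ac_simps)
  also have "mu g (Q + (g + Sv)) c (sm (Q + g + Sv) (sgn_deg (Q * g))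
      (mu g (Q + Sv) c (mu Q Sv y S)))
     = sm (g + (Q + (g + Sv))) (sgn_deg (Q * g)) (mu (g + g) (Q + Sv) (mu g g c c) (mu Q Sv y S))"
    using c y S by (simp add: mul_smul_right mul_assoc ac_simps)
  also have "\<dots> = z0 (g + Q + (g + Sv))"
    using c y S g by (simp add: odd_square_zero ac_simps)
  finally show ?thesis .
qed

end

section \<open>Cocycles, coboundaries and cohomology classes\<close>

context dg_algebra
begin

abbreviation "Z \<equiv> cocycles A"
abbreviation "B \<equiv> coboundaries A"

lemma Z_iff: "x \<in> Z k \<longleftrightarrow> x \<in> C k \<and> dd k x = z0 (k + 1)"
  by (simp add: cocycles_def)

lemma B_iff: "y \<in> B k \<longleftrightarrow> (\<exists>x\<in>C (k - 1). y = dd (k - 1) x)"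
  by (auto simp: coboundaries_def)

lemma B_C: "y \<in> B k \<Longrightarrow> y \<in> C k"
  unfolding B_iff by auto

lemma B_Z:
  assumes "y \<in> B k"
  shows "y \<in> Z k"
proof -
  obtain x where x: "x \<in> C (k - 1)" "y = dd (k - 1) x" using assms unfolding B_iff by auto
  have "dd (k - 1 + 1) (dd (k - 1) x) = z0 (k - 1 + 2)" using d_d[OF x(1)] .
  thus ?thesis unfolding Z_iff using x by (auto simp: add.commute)
qed

lemma B_zero [simp]: "z0 k \<in> B k"
  unfolding B_iff by (rule bexI[of _ "z0 (k - 1)"]) (use d_zero[of "k - 1"] in auto)

lemma B_add:
  assumes "u \<in> B k" and "v \<in> B k"
  shows "ad k u v \<in> B k"
proof -
  obtain x y where x: "x \<in> C (k - 1)" "u = dd (k - 1) x" and y: "y \<in> C (k - 1)" "v = dd (k - 1) y"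
    using assms unfolding B_iff by auto
  have "ad k u v = dd (k - 1) (ad (k - 1) x y)" using x y by (simp add: d_add_deg)
  thus ?thesis unfolding B_iff using x y by auto
qed

lemma B_smul:
  assumes "u \<in> B k"
  shows "sm k c u \<in> B k"
proof -
  obtain x where x: "x \<in> C (k - 1)" "u = dd (k - 1) x" using assms unfolding B_iff by auto
  have "sm k c u = dd (k - 1) (sm (k - 1) c x)" using x by (simp add: d_smul_deg)
  thus ?thesis unfolding B_iff using x by auto
qed

lemma B_add_cancel:
  assumes vw: "ad k v w \<in> B k" and w: "w \<in> B k" and v: "v \<in> C k"
  shows "v \<in> B k"
proof -
  have "v = ad k (ad k v w) (sm k (-1) w)" using v B_C[OF w] by (simp add: add_assoc)
  also have "\<dots> \<in> B k" using vw w by (simp add: B_add B_smul)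
  finally show ?thesis .
qed

lemma Z_zero [simp]: "z0 k \<in> Z k"
  by (simp add: Z_iff)

lemma Z_add: "u \<in> Z k \<Longrightarrow> v \<in> Z k \<Longrightarrow> ad k u v \<in> Z k"
  by (simp add: Z_iff d_add)

lemma Z_smul: "u \<in> Z k \<Longrightarrow> sm k c u \<in> Z k"
  by (simp add: Z_iff d_smul)

lemma Z_mul: "u \<in> Z k \<Longrightarrow> v \<in> Z l \<Longrightarrow> m = k + l \<Longrightarrow> mu k l u v \<in> Z m"
  by (simp add: Z_iff leibniz' mul_closed ac_simps)

lemma Z_mul_B:
  assumes x: "x \<in> Z k" and y: "y \<in> B l" and m: "m = k + l"
  shows "mu k l x y \<in> B m"
proof -
  obtain u where u: "u \<in> C (l - 1)" "y = dd (l - 1) u" using y unfolding B_iff by auto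
  have xC: "x \<in> C k" and dx: "dd k x = z0 (k + 1)" using x by (auto simp: Z_iff)
  have "dd (m - 1) (mu k (l - 1) x u) = sm m (sgn_deg k) (mu k l x y)"
    using leibniz'[OF xC u(1)] xC u m by (simp add: dx algebra_simps)
  hence "mu k l x y = dd (m - 1) (sm (m - 1) (sgn_deg k) (mu k (l - 1) x u))"
    using xC u m by (simp add: d_smul_deg mul_closed)
  thus ?thesis unfolding B_iff using xC u m by auto
qed

lemma B_mul_Z:
  assumes y: "y \<in> B k" and x: "x \<in> Z l" and m: "m = k + l"
  shows "mu k l y x \<in> B m"
proof -
  obtain u where u: "u \<in> C (k - 1)" "y = dd (k - 1) u" using y unfolding B_iff by auto
  have xC: "x \<in> C l" and dx: "dd l x = z0 (l + 1)" using x by (auto simp: Z_iff)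
  have "dd (m - 1) (mu (k - 1) l u x) = mu k l y x"
    using leibniz'[OF u(1) xC] xC u m by (simp add: dx mul_closed algebra_simps)
  thus ?thesis unfolding B_iff using xC u m by (auto intro!: bexI[of _ "mu (k - 1) l u x"])
qed

lemma mul_B_of_cohomologous:
  assumes x: "x \<in> Z k" and y: "y \<in> Z l" and \<beta>1: "\<beta>1 \<in> B k" and \<beta>2: "\<beta>2 \<in> B l"
    and m: "m = k + l" and exact: "mu k l (ad k x \<beta>1) (ad l y \<beta>2) \<in> B m"
  shows "mu k l x y \<in> B m"
proof (rule B_add_cancel)
  have xC: "x \<in> C k" and yC: "y \<in> C l" using x y by (auto simp: Z_iff)
  have \<beta>C: "\<beta>1 \<in> C k" "\<beta>2 \<in> C l" using \<beta>1 \<beta>2 by (auto intro: B_C)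
  have "mu k l (ad k x \<beta>1) (ad l y \<beta>2) =
      ad m (mu k l x y) (ad m (mu k l x \<beta>2) (ad m (mu k l \<beta>1 y) (mu k l \<beta>1 \<beta>2)))"
    using xC yC \<beta>C m by (simp add: mul_add_left mul_add_right add_assoc add_left_commute mul_closed)
  thus "ad m (mu k l x y) (ad m (mu k l x \<beta>2) (ad m (mu k l \<beta>1 y) (mu k l \<beta>1 \<beta>2))) \<in> B m"
    using exact by simp
  show "ad m (mu k l x \<beta>2) (ad m (mu k l \<beta>1 y) (mu k l \<beta>1 \<beta>2)) \<in> B m"
    using x y \<beta>1 \<beta>2 m B_Z[OF \<beta>2] by (intro B_add Z_mul_B B_mul_Z) auto
  show "mu k l x y \<in> C m" using xC yC m by auto
qed

lemma cls_mem: "x \<in> C k \<Longrightarrow> x \<in> cls A k x"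
  unfolding cls_def by (rule CollectI, rule exI[of _ "z0 k"]) simp

lemma mem_clsD: "y \<in> cls A k x \<Longrightarrow> \<exists>\<beta>\<in>B k. y = ad k x \<beta>"
  unfolding cls_def by auto

lemma rep_cls: "x \<in> C k \<Longrightarrow> \<exists>\<beta>\<in>B k. rep (cls A k x) = ad k x \<beta>"
  using someI[of "\<lambda>y. y \<in> cls A k x", OF cls_mem] unfolding rep_def by (blast dest: mem_clsD)

lemma cls_add_B:
  assumes x: "x \<in> C k" and \<beta>: "\<beta> \<in> B k"
  shows "cls A k (ad k x \<beta>) = cls A k x"
proof
  have \<beta>C: "\<beta> \<in> C k" using \<beta> by (rule B_C)
  show "cls A k (ad k x \<beta>) \<subseteq> cls A k x"
  proof
    fix y assume "y \<in> cls A k (ad k x \<beta>)"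
    then obtain c where c: "c \<in> B k" "y = ad k (ad k x \<beta>) c" unfolding cls_def by auto
    have "y = ad k x (ad k \<beta> c)" using c x \<beta>C B_C[OF c(1)] by (simp add: add_assoc)
    moreover have "ad k \<beta> c \<in> B k" using \<beta> c by (simp add: B_add)
    ultimately show "y \<in> cls A k x" unfolding cls_def by auto
  qed
  show "cls A k x \<subseteq> cls A k (ad k x \<beta>)"
  proof
    fix y assume "y \<in> cls A k x"
    then obtain c where c: "c \<in> B k" "y = ad k x c" unfolding cls_def by auto
    have "y = ad k (ad k x \<beta>) (ad k (sm k (-1) \<beta>) c)"
      using c x \<beta>C B_C[OF c(1)] by (simp add: add_assoc add_neg_cancel_left)
    moreover have "ad k (sm k (-1) \<beta>) c \<in> B k" using \<beta> c by (simp add: B_add B_smul)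
    ultimately show "y \<in> cls A k (ad k x \<beta>)" unfolding cls_def by auto
  qed
qed

lemma cls_B: "\<beta> \<in> B k \<Longrightarrow> cls A k \<beta> = cls A k (z0 k)"
  using cls_add_B[of "z0 k" k \<beta>] B_C[of \<beta> k] by simp

lemma cls_eqD: "x \<in> C k \<Longrightarrow> cls A k x = cls A k y \<Longrightarrow> \<exists>\<beta>\<in>B k. x = ad k y \<beta>"
  using cls_mem[of x k] mem_clsD by auto

end

context dg_algebra
begin

abbreviation "H \<equiv> cohom A"
abbreviation "zero_cls k \<equiv> cls A k (z0 k)"

lemma H_car: "dcar H k = cls A k ` Z k"
  and H_zero: "dzero H k = zero_cls k"
  and H_add: "dadd H k X Y = cls A k (ad k (rep X) (rep Y))"
  and H_smul: "dsmul H k c X = cls A k (sm k c (rep X))"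
  and H_mul: "dmul H k l X Y = cls A (k + l) (mu k l (rep X) (rep Y))"
  and H_unit: "dunit H = cls A 0 one"
  and H_d: "ddiff H k X = zero_cls (k + 1)"
  by (simp_all add: cohom_def)

lemma rep_H:
  assumes "X \<in> dcar H k"
  shows "rep X \<in> Z k" and "X = cls A k (rep X)"
proof -
  obtain z where z: "z \<in> Z k" "X = cls A k z" using assms unfolding H_car by auto
  have zC: "z \<in> C k" using z(1) by (simp add: Z_iff)
  obtain \<beta> where \<beta>: "\<beta> \<in> B k" "rep (cls A k z) = ad k z \<beta>" using rep_cls[OF zC] by auto
  show "rep X \<in> Z k" using z \<beta> by (simp add: Z_add B_Z)
  show "X = cls A k (rep X)" using z \<beta> zC by (simp add: cls_add_B)
qed

lemma rep_H_C: "X \<in> dcar H k \<Longrightarrow> rep X \<in> C k"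
  using rep_H(1) Z_iff by blast

lemma rep_zero_cls: "rep (zero_cls k) \<in> B k"
  using rep_cls[of "z0 k" k] by (auto simp: B_C)

lemma zero_cls_H [simp]: "zero_cls k \<in> dcar H k"
  unfolding H_car by auto

lemma H_mul_C: "X \<in> dcar H k \<Longrightarrow> Y \<in> dcar H l \<Longrightarrow> dmul H k l X Y \<in> dcar H (k + l)"
  unfolding H_mul H_car[of "k + l"] by (intro imageI Z_mul rep_H(1)) auto

lemma H_add_C: "X \<in> dcar H k \<Longrightarrow> Y \<in> dcar H k \<Longrightarrow> dadd H k X Y \<in> dcar H k"
  unfolding H_add by (subst H_car) (intro imageI Z_add rep_H(1))

lemma H_smul_C: "X \<in> dcar H k \<Longrightarrow> dsmul H k c X \<in> dcar H k"
  unfolding H_smul by (subst H_car) (intro imageI Z_smul rep_H(1))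

lemma H_unit_C: "dunit H \<in> dcar H 0"
  unfolding H_unit H_car by (simp add: Z_iff)

lemma H_mul_zero_left: "Y \<in> dcar H l \<Longrightarrow> dmul H k l (zero_cls k) Y = zero_cls (k + l)"
  unfolding H_mul by (rule cls_B, rule B_mul_Z[OF rep_zero_cls]) (auto intro: rep_H)

lemma H_mul_zero_right: "X \<in> dcar H k \<Longrightarrow> dmul H k l X (zero_cls l) = zero_cls (k + l)"
  unfolding H_mul by (rule cls_B, rule Z_mul_B[OF _ rep_zero_cls]) (auto intro: rep_H)

lemma H_smul_zero: "dsmul H k c (zero_cls k) = zero_cls k"
  unfolding H_smul by (rule cls_B, rule B_smul[OF rep_zero_cls])

lemma H_add_zero: "dadd H k (zero_cls k) (zero_cls k) = zero_cls k"
  unfolding H_add by (rule cls_B, rule B_add[OF rep_zero_cls rep_zero_cls])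

lemma H_smul_0: "X \<in> dcar H k \<Longrightarrow> dsmul H k 0 X = zero_cls k"
  unfolding H_smul using rep_H_C by simp

lemma H_cocycles: "cocycles H k = dcar H k"
  by (auto simp: cocycles_def H_d H_zero)

lemma H_coboundaries: "coboundaries H k = {zero_cls k}"
proof -
  have "coboundaries H k = {zero_cls (k - 1 + 1) | X. X \<in> dcar H (k - 1)}"
    by (simp add: coboundaries_def H_d)
  also have "\<dots> = {zero_cls k}" using zero_cls_H[of "k - 1"]
    by (auto intro!: exI[where x="zero_cls (k - 1)"])
  finally show ?thesis .
qed

lemma H_add_eq_zero:
  assumes X: "X \<in> dcar H k" and Y: "Y \<in> dcar H k"
    and eq: "cls A k (sm k (-1) (rep X)) = dadd H k Y (zero_cls k)"
  shows "dadd H k X Y = zero_cls k"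
proof -
  let ?x = "rep X" and ?y = "rep Y" and ?z = "rep (zero_cls k)"
  have xyz: "?x \<in> C k" "?y \<in> C k" "?z \<in> C k"
    using X Y rep_zero_cls by (auto intro: rep_H_C B_C)
  obtain \<beta> where \<beta>: "\<beta> \<in> B k" "sm k (-1) ?x = ad k (ad k ?y ?z) \<beta>"
    using cls_eqD[of "sm k (-1) ?x" k] eq xyz unfolding H_add by auto
  have "?x = sm k (-1) (sm k (-1) ?x)" using xyz by simp
  also have "\<dots> = ad k (sm k (-1) ?y) (sm k (-1) (ad k ?z \<beta>))"
    unfolding \<beta>(2) using xyz B_C[OF \<beta>(1)] by (simp add: smul_add add_assoc)
  finally have "ad k ?x ?y = sm k (-1) (ad k ?z \<beta>)"
    using xyz B_C[OF \<beta>(1)] by (simp add: add_comm[of _ k ?y] add_neg_cancel_left)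
  also have "\<dots> \<in> B k" using rep_zero_cls \<beta> by (simp add: B_add B_smul)
  finally show ?thesis unfolding H_add by (rule cls_B)
qed

end

context dg_algebra
begin

lemma hom_C: "dga_hom A Y f \<Longrightarrow> x \<in> C k \<Longrightarrow> f k x \<in> dcar Y k"
  and hom_add: "dga_hom A Y f \<Longrightarrow> x \<in> C k \<Longrightarrow> y \<in> C k \<Longrightarrow> f k (ad k x y) = dadd Y k (f k x) (f k y)"
  and hom_smul: "dga_hom A Y f \<Longrightarrow> x \<in> C k \<Longrightarrow> f k (sm k c x) = dsmul Y k c (f k x)"
  and hom_unit: "dga_hom A Y f \<Longrightarrow> f 0 one = dunit Y"
  and hom_d: "dga_hom A Y f \<Longrightarrow> x \<in> C k \<Longrightarrow> f (k + 1) (dd k x) = ddiff Y k (f k x)"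
  unfolding dga_hom_def by auto

lemma hom_mul: "dga_hom A Y f \<Longrightarrow> x \<in> C k \<Longrightarrow> y \<in> C l \<Longrightarrow> m = k + l \<Longrightarrow>
    f m (mu k l x y) = dmul Y k l (f k x) (f l y)"
  unfolding dga_hom_def by auto

text \<open>The hypothesis \<open>zero\<close> replaces the vector space axioms of the target, which are not
  available for \<open>cohom A\<close>.\<close>

lemma hom_zero:
  assumes f: "dga_hom A Y f" and zero: "\<And>k y. y \<in> dcar Y k \<Longrightarrow> dsmul Y k 0 y = dzero Y k"
  shows "f k (z0 k) = dzero Y k"
  using hom_smul[OF f, of "z0 k" k 0] zero hom_C[OF f] by simp

lemma hom_Z:
  assumes f: "dga_hom A Y f" and zero: "\<And>k y. y \<in> dcar Y k \<Longrightarrow> dsmul Y k 0 y = dzero Y k"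
    and x: "x \<in> Z k"
  shows "f k x \<in> cocycles Y k"
  using x hom_d[OF f, of x k] hom_zero[OF f zero] hom_C[OF f]
  by (auto simp: Z_iff cocycles_def)

lemma hom_B: "dga_hom A Y f \<Longrightarrow> x \<in> B k \<Longrightarrow> f k x \<in> coboundaries Y k"
  unfolding B_iff coboundaries_def using hom_d hom_C by fastforce

end

section \<open>Massey sums over lists of indices\<close>

text \<open>For a list \<open>js\<close> of indices, \<open>xi_prod\<close> is the product of the \<open>\<xi> j\<close>, \<open>j \<in> js\<close>, and \<open>msum\<close>
  is the Massey sum \<open>\<Sum>\<^sub>i \<xi>\<^sub>1\<^sup>- \<cdots> \<xi>\<^sub>i\<^sub>-\<^sub>1\<^sup>- b\<^sub>i \<xi>\<^sub>i\<^sub>+\<^sub>1 \<cdots> \<xi>\<^sub>m\<close> over the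
  indices of \<open>js\<close> (\<open>x\<^sup>-\<close> standing for \<open>bar x\<close>), computed by the recursion
  \<open>msum (j # js) = b j \<cdot> xi_prod js + bar (\<xi> j) \<cdot> msum js\<close>. Working with arbitrary lists
  makes both amenable to induction; \<open>massey_sum\<close> is the case \<open>js = [1..<Suc n]\<close>.\<close>

definition xi_deg :: "int \<Rightarrow> (nat \<Rightarrow> int) \<Rightarrow> nat \<Rightarrow> int"
  where "xi_deg p q j = p + q j - 1"

definition prod_deg :: "int \<Rightarrow> (nat \<Rightarrow> int) \<Rightarrow> nat list \<Rightarrow> int"
  where "prod_deg p q js = sum_list (map (xi_deg p q) js)"

definition msum_deg :: "int \<Rightarrow> (nat \<Rightarrow> int) \<Rightarrow> nat list \<Rightarrow> int"
  where "msum_deg p q js = prod_deg p q js - (p - 1)"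

lemma prod_deg_Nil [simp]: "prod_deg p q [] = 0"
  and prod_deg_Cons [simp]: "prod_deg p q (j # js) = xi_deg p q j + prod_deg p q js"
  by (simp_all add: prod_deg_def)

lemma msum_deg_Cons: "msum_deg p q (j # js) = q j + prod_deg p q js"
  and msum_deg_Cons': "msum_deg p q (j # js) = xi_deg p q j + msum_deg p q js"
  by (simp_all add: msum_deg_def xi_deg_def)

primrec xi_prod ::
  "('a, 'b) dga_scheme \<Rightarrow> int \<Rightarrow> (nat \<Rightarrow> int) \<Rightarrow> (nat \<Rightarrow> 'a) \<Rightarrow> nat list \<Rightarrow> 'a"
  where
    "xi_prod X p q \<xi> [] = dunit X"
  | "xi_prod X p q \<xi> (j # js) = dmul X (xi_deg p q j) (prod_deg p q js) (\<xi> j) (xi_prod X p q \<xi> js)"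

primrec msum ::
  "('a, 'b) dga_scheme \<Rightarrow> int \<Rightarrow> (nat \<Rightarrow> int) \<Rightarrow> (nat \<Rightarrow> 'a) \<Rightarrow> (nat \<Rightarrow> 'a) \<Rightarrow> nat list \<Rightarrow> 'a"
  where
    "msum X p q b \<xi> [] = dzero X (msum_deg p q [])"
  | "msum X p q b \<xi> (j # js) = dadd X (msum_deg p q (j # js))
      (dmul X (q j) (prod_deg p q js) (b j) (xi_prod X p q \<xi> js))
      (dmul X (xi_deg p q j) (msum_deg p q js)
        (dsmul X (xi_deg p q j) (sgn_deg (xi_deg p q j)) (\<xi> j)) (msum X p q b \<xi> js))"

text \<open>If \<open>\<xi> j = \<xi>' j + a \<gamma> j\<close> and \<open>b j = b' j + d (\<gamma> j)\<close>, then the two Massey sums differ by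
  the differential of \<open>msum_primitive\<close> (lemma \<open>msum_change_b\<close>).\<close>

primrec msum_primitive ::
  "('a, 'b) dga_scheme \<Rightarrow> int \<Rightarrow> (nat \<Rightarrow> int) \<Rightarrow> (nat \<Rightarrow> 'a) \<Rightarrow> (nat \<Rightarrow> 'a) \<Rightarrow> (nat \<Rightarrow> 'a) \<Rightarrow>
    nat list \<Rightarrow> 'a"
  where
    "msum_primitive X p q \<xi>' \<gamma> \<xi> [] = dzero X (msum_deg p q [] - 1)"
  | "msum_primitive X p q \<xi>' \<gamma> \<xi> (j # js) = dadd X (msum_deg p q (j # js) - 1)
      (dmul X (xi_deg p q j) (msum_deg p q js - 1) (\<xi>' j) (msum_primitive X p q \<xi>' \<gamma> \<xi> js))
      (dmul X (q j - 1) (prod_deg p q js) (\<gamma> j) (xi_prod X p q \<xi> js))"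

definition defining_system ::
  "('a, 'b) dga_scheme \<Rightarrow> int \<Rightarrow> (nat \<Rightarrow> int) \<Rightarrow> 'a \<Rightarrow> (nat \<Rightarrow> 'a) \<Rightarrow> (nat \<Rightarrow> 'a) \<Rightarrow> nat set \<Rightarrow> bool"
  where "defining_system X p q a b \<xi> I \<longleftrightarrow> (\<forall>j\<in>I. b j \<in> cocycles X (q j) \<and>
    \<xi> j \<in> dcar X (xi_deg p q j) \<and> ddiff X (xi_deg p q j) (\<xi> j) = dmul X p (q j) a (b j))"

lemma xi_prod_cong: "\<forall>j\<in>set js. \<xi> j = \<xi>' j \<Longrightarrow> xi_prod X p q \<xi> js = xi_prod X p q \<xi>' js"
  by (induction js) auto

lemma msum_cong:
  "\<forall>j\<in>set js. \<xi> j = \<xi>' j \<and> b j = b' j \<Longrightarrow> msum X p q b \<xi> js = msum X p q b' \<xi>' js"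
proof (induction js)
  case (Cons j js)
  have "xi_prod X p q \<xi> js = xi_prod X p q \<xi>' js" using Cons.prems by (intro xi_prod_cong) auto
  thus ?case using Cons by simp
qed simp

context dg_algebra
begin

lemma xi_prod_C:
  "\<forall>j\<in>set js. \<xi> j \<in> C (xi_deg p q j) \<Longrightarrow> xi_prod A p q \<xi> js \<in> C (prod_deg p q js)"
  by (induction js) auto

lemma msum_C:
  "\<forall>j\<in>set js. \<xi> j \<in> C (xi_deg p q j) \<and> b j \<in> C (q j) \<Longrightarrow> msum A p q b \<xi> js \<in> C (msum_deg p q js)"
proof (induction js)
  case (Cons j js)
  have "xi_prod A p q \<xi> js \<in> C (prod_deg p q js)" using Cons.prems by (intro xi_prod_C) auto
  thus ?case using Cons by (auto simp: msum_deg_def xi_deg_def)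
qed simp

lemma defining_systemD:
  assumes "defining_system A p q a b \<xi> I" and "j \<in> I"
  shows "b j \<in> C (q j)" and "dd (q j) (b j) = z0 (q j + 1)"
    and "\<xi> j \<in> C (xi_deg p q j)" and "dd (xi_deg p q j) (\<xi> j) = mu p (q j) a (b j)"
  using assms by (auto simp: defining_system_def cocycles_def)

lemma defining_system_C:
  "defining_system A p q a b \<xi> I \<Longrightarrow> \<forall>j\<in>I. \<xi> j \<in> C (xi_deg p q j) \<and> b j \<in> C (q j)"
  by (auto simp: defining_system_def cocycles_def)

end

definition msum_term ::
  "('a, 'b) dga_scheme \<Rightarrow> int \<Rightarrow> (nat \<Rightarrow> int) \<Rightarrow> (nat \<Rightarrow> 'a) \<Rightarrow> (nat \<Rightarrow> 'a) \<Rightarrow> nat list \<Rightarrow> nat \<Rightarrow> 'a"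
  where "msum_term X p q b \<xi> js k = snd (prodl X
    (map (\<lambda>j. (xi_deg p q j, bar X (xi_deg p q j) (\<xi> j))) (take k js)
     @ [(q (js ! k), b (js ! k))] @ map (\<lambda>j. (xi_deg p q j, \<xi> j)) (drop (Suc k) js)))"

lemma xi_deg_fun: "xi_deg p q = (\<lambda>j. p + q j - 1)"
  by (rule ext) (simp add: xi_deg_def)

lemma prodl_fst: "fst (prodl X xs) = sum_list (map fst xs)"
  by (induction xs) auto

lemma msum_term_deg:
  assumes "k < length js"
  shows "sum_list (map fst (map (\<lambda>j. (xi_deg p q j, bar X (xi_deg p q j) (\<xi> j))) (take k js)
    @ [(q (js ! k), b (js ! k))] @ map (\<lambda>j. (xi_deg p q j, \<xi> j)) (drop (Suc k) js)))
    = msum_deg p q js"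
proof -
  have "prod_deg p q js = sum_list (map (xi_deg p q) (take k js @ js ! k # drop (Suc k) js))"
    unfolding prod_deg_def using id_take_nth_drop[OF assms] by simp
  thus ?thesis by (simp add: msum_deg_def o_def xi_deg_fun xi_deg_def)
qed

lemma prodl_xi_prod: "snd (prodl X (map (\<lambda>j. (xi_deg p q j, \<xi> j)) js)) = xi_prod X p q \<xi> js"
  by (induction js) (auto simp: prodl_fst o_def prod_deg_def)

lemma msum_term_0:
  "msum_term X p q b \<xi> (j # js) 0 = dmul X (q j) (prod_deg p q js) (b j) (xi_prod X p q \<xi> js)"
  unfolding msum_term_def by (simp add: prodl_fst prodl_xi_prod o_def prod_deg_def)

lemma msum_term_Suc:
  "k < length js \<Longrightarrow> msum_term X p q b \<xi> (j # js) (Suc k) =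
    dmul X (xi_deg p q j) (msum_deg p q js) (bar X (xi_deg p q j) (\<xi> j)) (msum_term X p q b \<xi> js k)"
  unfolding msum_term_def using msum_term_deg[of k js p q X \<xi> b] by (simp add: prodl_fst)

context dg_algebra
begin

lemma foldr_mul_left:
  assumes x: "x \<in> C E" and f: "\<forall>k\<in>set ks. f k \<in> C Sv" and D: "D = E + Sv"
  shows "foldr (\<lambda>k acc. ad D (mu E Sv x (f k)) acc) ks (z0 D)
       = mu E Sv x (foldr (\<lambda>k acc. ad Sv (f k) acc) ks (z0 Sv))"
  using f
proof (induction ks)
  case Nil thus ?case using x D by simp
next
  case (Cons k ks)
  have fs: "foldr (\<lambda>k acc. ad Sv (f k) acc) ks (z0 Sv) \<in> C Sv"
    using Cons.prems by (induction ks) auto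
  show ?case using Cons x fs D by (simp add: mul_add_right_deg)
qed

lemma msum_term_C:
  "\<forall>j\<in>set js. \<xi> j \<in> C (xi_deg p q j) \<and> b j \<in> C (q j) \<Longrightarrow> k < length js \<Longrightarrow>
    msum_term A p q b \<xi> js k \<in> C (msum_deg p q js)"
proof (induction js arbitrary: k)
  case Nil thus ?case by simp
next
  case (Cons j js)
  show ?case
  proof (cases k)
    case 0
    have "xi_prod A p q \<xi> js \<in> C (prod_deg p q js)" using Cons.prems by (intro xi_prod_C) auto
    thus ?thesis using 0 Cons.prems by (auto simp: msum_term_0 msum_deg_def xi_deg_def)
  next
    case (Suc k')
    have "msum_term A p q b \<xi> js k' \<in> C (msum_deg p q js)" using Cons Suc by auto
    thus ?thesis using Suc Cons.prems by (auto simp: msum_term_Suc bar_def msum_deg_def xi_deg_def)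
  qed
qed

lemma msum_eq_sum_terms:
  assumes "\<forall>j\<in>set js. \<xi> j \<in> C (xi_deg p q j) \<and> b j \<in> C (q j)"
  shows "foldr (\<lambda>k acc. ad (msum_deg p q js) (msum_term A p q b \<xi> js k) acc) [0..<length js]
      (z0 (msum_deg p q js)) = msum A p q b \<xi> js"
  using assms
proof (induction js)
  case Nil thus ?case by simp
next
  case (Cons j js)
  let ?D = "msum_deg p q (j # js)" and ?Dt = "msum_deg p q js" and ?E = "xi_deg p q j"
  let ?\<xi>j = "bar A ?E (\<xi> j)"
  have xj: "\<xi> j \<in> C ?E" "b j \<in> C (q j)" using Cons.prems by auto
  have hs: "\<forall>j\<in>set js. \<xi> j \<in> C (xi_deg p q j) \<and> b j \<in> C (q j)" using Cons.prems by auto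
  have up: "[0..<length (j # js)] = 0 # map Suc [0..<length js]"
    by (simp add: map_Suc_upt upt_conv_Cons del: upt_Suc)
  have "foldr (\<lambda>k acc. ad ?D (msum_term A p q b \<xi> (j # js) k) acc) (map Suc [0..<length js]) (z0 ?D)
     = foldr (\<lambda>k acc. ad ?D (mu ?E ?Dt ?\<xi>j (msum_term A p q b \<xi> js k)) acc) [0..<length js] (z0 ?D)"
    by (simp add: foldr_map o_def) (rule foldr_cong, auto simp: msum_term_Suc)
  also have "\<dots> = mu ?E ?Dt ?\<xi>j
      (foldr (\<lambda>k acc. ad ?Dt (msum_term A p q b \<xi> js k) acc) [0..<length js] (z0 ?Dt))"
    using xj hs msum_term_C[OF hs] by (intro foldr_mul_left)
        (auto simp: bar_def msum_deg_def xi_deg_def)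
  also have "\<dots> = mu ?E ?Dt ?\<xi>j (msum A p q b \<xi> js)"
    using Cons.IH hs by simp
  finally show ?case unfolding up by (simp add: msum_term_0 bar_def)
qed

lemma massey_deg_eq_msum_deg: "massey_deg p n q = msum_deg p q [1..<Suc n]"
proof -
  have "prod_deg p q [1..<Suc n] = (\<Sum>j\<in>{1..n}. p + q j - 1)"
    unfolding prod_deg_def xi_deg_fun interv_sum_list_conv_sum_set_nat
    by (simp add: atLeastLessThanSuc_atLeastAtMost del: upt_Suc)
  also have "\<dots> = (\<Sum>j\<in>{1..n}. (p - 1) + q j)" by (simp add: algebra_simps)
  also have "\<dots> = int n * (p - 1) + (\<Sum>j\<in>{1..n}. q j)" by (simp add: sum.distrib)
  finally show ?thesis unfolding msum_deg_def massey_deg_def by (simp add: algebra_simps)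
qed

lemma massey_term_eq_msum_term:
  "k < n \<Longrightarrow> massey_term A p n q b \<xi> (Suc k) = msum_term A p q b \<xi> [1..<Suc n] k"
  unfolding massey_term_def msum_term_def xi_deg_fun by (simp del: upt_Suc)

lemma massey_sum_eq_msum:
  assumes "\<forall>j\<in>{1..n}. \<xi> j \<in> C (xi_deg p q j) \<and> b j \<in> C (q j)"
  shows "massey_sum A p n q b \<xi> = msum A p q b \<xi> [1..<Suc n]"
proof -
  let ?js = "[1..<Suc n]"
  have up: "?js = map Suc [0..<n]" by (simp add: map_Suc_upt)
  have "massey_sum A p n q b \<xi> =
      foldr (\<lambda>k acc. ad (msum_deg p q ?js) (msum_term A p q b \<xi> ?js k) acc)
      [0..<length ?js] (z0 (msum_deg p q ?js))"
    unfolding massey_sum_def massey_deg_eq_msum_deg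
    by (subst (1) up, simp add: foldr_map o_def del: upt_Suc)
      (rule foldr_cong, auto simp: massey_term_eq_msum_term simp del: upt_Suc)
  also have "\<dots> = msum A p q b \<xi> ?js"
    using assms by (intro msum_eq_sum_terms) auto
  finally show ?thesis .
qed

end

section \<open>The differential of a Massey sum\<close>

context dg_algebra
begin

text \<open>Degrees enter the step lemmas below as variables with defining equations, so that the
  lemmas match the degree expressions produced by the recursions.\<close>

lemma d_xi_prod_step:
  assumes degs: "E = p - 1 + Q" "Pv = p - 1 + Sv" "D = E + Pv" "D2 = E + Sv"
    and p: "even p" and a: "a \<in> C p" and x: "x \<in> C E" and y: "y \<in> C Q"
    and P: "P \<in> C Pv" and S: "S \<in> C Sv"
    and dx: "dd E x = mu p Q a y" and dP: "dd Pv P = mu p Sv a S"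
  shows "dd D (mu E Pv x P) = mu p D2 a (ad D2 (mu Q Pv y P) (mu E Sv (sm E (sgn_deg E) x) S))"
proof -
  note x = x[unfolded degs] and P = P[unfolded degs]
    and dx = dx[unfolded degs] and dP = dP[unfolded degs]
  let ?E = "p - 1 + Q" and ?D2 = "p - 1 + Q + Sv"
  have "dd (p - 1 + Q + (p - 1 + Sv)) (mu (p - 1 + Q) (p - 1 + Sv) x P)
     = ad (p + ?D2) (mu (?E + 1) (p - 1 + Sv) (dd ?E x) P)
          (sm (p + ?D2) (sgn_deg ?E) (mu ?E (p - 1 + Sv + 1) x (dd (p - 1 + Sv) P)))"
    using x P by (rule leibniz) auto
  also have "mu (?E + 1) (p - 1 + Sv) (dd ?E x) P = mu p ?D2 a (mu Q (p - 1 + Sv) y P)"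
    unfolding dx using a y P by (rule mul_assoc) auto
  also have "mu ?E (p - 1 + Sv + 1) x (dd (p - 1 + Sv) P) = mu (?E + p) Sv (mu ?E p x a) S"
    unfolding dP using x a S by (rule mul_assoc[symmetric]) auto
  also have "mu ?E p x a = sm (?E + p) (sgn_deg (?E * p)) (mu p ?E a x)"
    using x a by (rule mul_comm) auto
  also have "sgn_deg (?E * p) = 1" using p by (simp add: sgn_deg_mult)
  also have "sm (?E + p) 1 (mu p ?E a x) = mu p ?E a x" using a x by simp
  also have "mu (?E + p) Sv (mu p ?E a x) S = mu p ?D2 a (mu ?E Sv x S)"
    using a x S by (rule mul_assoc) auto
  also have "sm (p + ?D2) (sgn_deg ?E) (mu p ?D2 a (mu ?E Sv x S))
      = mu p ?D2 a (mu ?E Sv (sm ?E (sgn_deg ?E) x) S)"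
    using a x S by (simp add: mul_smul_left mul_smul_right mul_closed)
  also have "ad (p + ?D2) (mu p ?D2 a (mu Q (p - 1 + Sv) y P))
      (mu p ?D2 a (mu ?E Sv (sm ?E (sgn_deg ?E) x) S))
     = mu p ?D2 a (ad ?D2 (mu Q (p - 1 + Sv) y P) (mu ?E Sv (sm ?E (sgn_deg ?E) x) S))"
    using a x y P S by (subst mul_add_right_deg) auto
  finally show ?thesis unfolding degs .
qed

text \<open>The two products \<open>\<plusminus>(a y) S\<close> cancel because \<open>|x| = p - 1 + |y|\<close> and \<open>|y|\<close> have opposite
  parity.\<close>

lemma d_msum_step:
  assumes degs: "E = p - 1 + Q" "Pv = p - 1 + Sv" "D2 = E + Sv" "D3 = D2 + 1"
    and p: "even p" and a: "a \<in> C p" and x: "x \<in> C E" and y: "y \<in> C Q"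
    and P: "P \<in> C Pv" and S: "S \<in> C Sv"
    and dx: "dd E x = mu p Q a y" and dP: "dd Pv P = mu p Sv a S"
    and dy: "dd Q y = z0 (Q + 1)" and dS: "dd Sv S = z0 (Sv + 1)"
  shows "dd D2 (ad D2 (mu Q Pv y P) (mu E Sv (sm E (sgn_deg E) x) S)) = z0 D3"
proof -
  note x = x[unfolded degs] and P = P[unfolded degs]
    and dx = dx[unfolded degs] and dP = dP[unfolded degs]
  let ?E = "p - 1 + Q" and ?D = "p - 1 + Q + Sv"
  define w where "w = mu (p + Q) Sv (mu p Q a y) S"
  have w: "w \<in> C (?D + 1)" unfolding w_def using a y S by auto
  have sx: "sm ?E (sgn_deg ?E) x \<in> C ?E" using x by simp
  have "dd ?D (ad ?D (mu Q (p - 1 + Sv) y P) (mu ?E Sv (sm ?E (sgn_deg ?E) x) S))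
     = ad (?D + 1) (dd ?D (mu Q (p - 1 + Sv) y P)) (dd ?D (mu ?E Sv (sm ?E (sgn_deg ?E) x) S))"
    using y P sx S by (intro d_add_deg) auto
  also have "dd ?D (mu Q (p - 1 + Sv) y P) = ad (?D + 1) (mu (Q + 1) (p - 1 + Sv) (dd Q y) P)
       (sm (?D + 1) (sgn_deg Q) (mu Q (p - 1 + Sv + 1) y (dd (p - 1 + Sv) P)))"
    using y P by (rule leibniz) auto
  also have "mu (Q + 1) (p - 1 + Sv) (dd Q y) P = z0 (?D + 1)"
    unfolding dy using P by (simp add: ac_simps)
  also have "mu Q (p - 1 + Sv + 1) y (dd (p - 1 + Sv) P) = mu (Q + p) Sv (mu Q p y a) S"
    unfolding dP using y a S by (rule mul_assoc[symmetric]) auto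
  also have "mu Q p y a = sm (Q + p) (sgn_deg (Q * p)) (mu p Q a y)"
    using y a by (rule mul_comm) auto
  also have "sgn_deg (Q * p) = 1" using p by (simp add: sgn_deg_mult)
  also have "sm (Q + p) 1 (mu p Q a y) = mu p Q a y" using a y by simp
  also have "mu (Q + p) Sv (mu p Q a y) S = w" unfolding w_def by (simp add: ac_simps)
  also have "dd ?D (mu ?E Sv (sm ?E (sgn_deg ?E) x) S) = ad (?D + 1)
      (mu (?E + 1) Sv (dd ?E (sm ?E (sgn_deg ?E) x)) S)
       (sm (?D + 1) (sgn_deg ?E) (mu ?E (Sv + 1) (sm ?E (sgn_deg ?E) x) (dd Sv S)))"
    using sx S by (rule leibniz) auto
  also have "mu ?E (Sv + 1) (sm ?E (sgn_deg ?E) x) (dd Sv S) = z0 (?D + 1)"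
    unfolding dS using sx by (simp add: ac_simps)
  also have "dd ?E (sm ?E (sgn_deg ?E) x) = sm (?E + 1) (sgn_deg ?E) (mu p Q a y)"
    unfolding dx[symmetric] using x by (rule d_smul_deg) simp
  also have "mu (?E + 1) Sv (sm (?E + 1) (sgn_deg ?E) (mu p Q a y)) S = sm (?D + 1) (sgn_deg ?E) w"
    unfolding w_def using a y S by (subst mul_smul_left_deg) (auto simp: ac_simps)
  finally have eq: "dd ?D (ad ?D (mu Q (p - 1 + Sv) y P) (mu ?E Sv (sm ?E (sgn_deg ?E) x) S)) =
    ad (?D + 1) (ad (?D + 1) (z0 (?D + 1)) (sm (?D + 1) (sgn_deg Q) w))
     (ad (?D + 1) (sm (?D + 1) (sgn_deg ?E) w) (sm (?D + 1) (sgn_deg ?E) (z0 (?D + 1))))" .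
  have sE: "sgn_deg ?E = - sgn_deg Q" using p by (simp add: sgn_deg_add)
  show ?thesis unfolding degs eq unfolding sE using w by (simp add: smul_cancel)
qed

lemma d_xi_prod_msum:
  assumes p: "even p" and a: "a \<in> C p" and sys: "defining_system A p q a b \<xi> (set js)"
  shows "dd (prod_deg p q js) (xi_prod A p q \<xi> js) = mu p (msum_deg p q js) a (msum A p q b \<xi> js)
       \<and> dd (msum_deg p q js) (msum A p q b \<xi> js) = z0 (msum_deg p q js + 1)"
  using sys
proof (induction js)
  case Nil
  have "mu p (msum_deg p q []) a (z0 (msum_deg p q [])) = z0 1" using a by (simp add: msum_deg_def)
  thus ?case by simp
next
  case (Cons j js)
  have IH: "dd (prod_deg p q js) (xi_prod A p q \<xi> js) = mu p (msum_deg p q js) a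
      (msum A p q b \<xi> js)"
      "dd (msum_deg p q js) (msum A p q b \<xi> js) = z0 (msum_deg p q js + 1)"
    using Cons by (auto simp: defining_system_def)
  note j = defining_systemD[OF Cons.prems list.set_intros(1)]
  have PS: "xi_prod A p q \<xi> js \<in> C (prod_deg p q js)" "msum A p q b \<xi> js \<in> C (msum_deg p q js)"
    using defining_system_C[OF Cons.prems] by (auto intro!: xi_prod_C msum_C)
  show ?case
  proof
    show "dd (prod_deg p q (j # js)) (xi_prod A p q \<xi> (j # js))
        = mu p (msum_deg p q (j # js)) a (msum A p q b \<xi> (j # js))"
      unfolding xi_prod.simps msum.simps
      by (rule d_xi_prod_step[OF _ _ _ _ p a j(3) j(1) PS j(4) IH(1)])
          (auto simp: xi_deg_def msum_deg_def)
    show "dd (msum_deg p q (j # js)) (msum A p q b \<xi> (j # js)) = z0 (msum_deg p q (j # js) + 1)"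
      unfolding msum.simps
      by (rule d_msum_step[OF _ _ _ _ p a j(3) j(1) PS j(4) IH(1) j(2) IH(2)])
          (auto simp: xi_deg_def msum_deg_def)
  qed
qed

lemma msum_Z:
  "even p \<Longrightarrow> a \<in> C p \<Longrightarrow> defining_system A p q a b \<xi> (set js) \<Longrightarrow>
    msum A p q b \<xi> js \<in> Z (msum_deg p q js)"
  using d_xi_prod_msum defining_system_C by (auto simp: Z_iff intro!: msum_C)

end

section \<open>Changing the defining system\<close>

context dg_algebra
begin

lemma xi_prod_shift_step:
  assumes degs: "E = g + Q" "Pv = g + Sv" "D = E + Pv" "D2 = E + Sv"
    and g: "odd g" and x: "x \<in> C E" and y: "y \<in> C Q" and c: "c \<in> C g"
    and P: "P \<in> C Pv" and S: "S \<in> C Sv"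
  shows "mu E Pv (ad E x (mu g Q c y)) (ad Pv P (mu g Sv c S))
    = ad D (mu E Pv x P) (mu g D2 c (ad D2 (mu Q Pv y P) (mu E Sv (sm E (sgn_deg E) x) S)))"
proof -
  note x = x[unfolded degs] and P = P[unfolded degs]
  let ?E = "g + Q" and ?Pv = "g + Sv" and ?D = "g + Q + (g + Sv)" and ?D2 = "g + Q + Sv"
  have cy: "mu g Q c y \<in> C ?E" using c y by simp
  have cS: "mu g Sv c S \<in> C ?Pv" using c S by simp
  have t2: "mu ?E ?Pv x (mu g Sv c S) = mu g ?D2 c (mu ?E Sv (sm ?E (sgn_deg ?E) x) S)"
    using mul_left_commute_odd[OF g x c S] .
  have t3: "mu ?E ?Pv (mu g Q c y) P = mu g ?D2 c (mu Q ?Pv y P)"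
    using c y P by (simp add: mul_assoc ac_simps)
  have t4: "mu ?E ?Pv (mu g Q c y) (mu g Sv c S) = z0 ?D"
    using g c y S by (rule mul_odd_factor_twice)
  have "mu ?E ?Pv (ad ?E x (mu g Q c y)) (ad ?Pv P (mu g Sv c S))
     = ad ?D (ad ?D (mu ?E ?Pv x P) (mu ?E ?Pv (mu g Q c y) P))
         (ad ?D (mu ?E ?Pv x (mu g Sv c S)) (mu ?E ?Pv (mu g Q c y) (mu g Sv c S)))"
    using x cy P cS by (simp add: mul_add_left mul_add_right)
  also have "\<dots> = ad ?D (mu ?E ?Pv x P)
      (ad ?D (mu g ?D2 c (mu Q ?Pv y P)) (mu g ?D2 c (mu ?E Sv (sm ?E (sgn_deg ?E) x) S)))"
    unfolding t2 t3 t4 using x c y P S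
    by (subst add_zero_right) (auto intro!: add_assoc)
  also have "\<dots> = ad ?D (mu ?E ?Pv x P)
        (mu g ?D2 c (ad ?D2 (mu Q ?Pv y P) (mu ?E Sv (sm ?E (sgn_deg ?E) x) S)))"
    using x c y P S by (simp add: mul_add_right ac_simps)
  finally show ?thesis unfolding degs .
qed

lemma msum_shift_step:
  assumes degs: "E = g + Q" "Pv = g + Sv" "D2 = E + Sv"
    and g: "odd g" and x: "x \<in> C E" and y: "y \<in> C Q" and c: "c \<in> C g"
    and P: "P \<in> C Pv" and S: "S \<in> C Sv"
  shows "ad D2 (mu Q Pv y (ad Pv P (mu g Sv c S)))
      (mu E Sv (sm E (sgn_deg E) (ad E x (mu g Q c y))) S)
    = ad D2 (mu Q Pv y P) (mu E Sv (sm E (sgn_deg E) x) S)"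
proof -
  note x = x[unfolded degs] and P = P[unfolded degs]
  let ?E = "g + Q" and ?Pv = "g + Sv" and ?D2 = "g + Q + Sv"
  define u where "u = mu ?E Sv (mu g Q c y) S"
  have u: "u \<in> C ?D2" unfolding u_def using c y S by simp
  have e1: "mu Q ?Pv y (mu g Sv c S) = sm ?D2 (sgn_deg Q) u"
  proof -
    have "mu Q ?Pv y (mu g Sv c S) = mu (Q + g) Sv (mu Q g y c) S"
      using c y S by (simp add: mul_assoc)
    also have "mu Q g y c = sm (Q + g) (sgn_deg (Q * g)) (mu g Q c y)"
      using c y by (simp add: mul_comm[of y Q c g "Q + g"])
    finally show ?thesis unfolding u_def using c y S g
      by (simp add: mul_smul_left ac_simps sgn_deg_mult sgn_deg_def)
  qed
  have e2: "mu ?E Sv (sm ?E (sgn_deg ?E) (mu g Q c y)) S = sm ?D2 (- sgn_deg Q) u"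
    unfolding u_def using c y S g by (simp add: mul_smul_left sgn_deg_add)
  have "ad ?D2 (mu Q ?Pv y (ad ?Pv P (mu g Sv c S)))
           (mu ?E Sv (sm ?E (sgn_deg ?E) (ad ?E x (mu g Q c y))) S)
      = ad ?D2 (ad ?D2 (mu Q ?Pv y P) (mu Q ?Pv y (mu g Sv c S)))
          (ad ?D2 (mu ?E Sv (sm ?E (sgn_deg ?E) x) S)
             (mu ?E Sv (sm ?E (sgn_deg ?E) (mu g Q c y)) S))"
    using x y c P S by (simp add: mul_add_left mul_add_right smul_add ac_simps)
  also have "\<dots> = ad ?D2 (ad ?D2 (mu Q ?Pv y P) (sm ?D2 (sgn_deg Q) u))
          (ad ?D2 (mu ?E Sv (sm ?E (sgn_deg ?E) x) S)
             (sm ?D2 (- sgn_deg Q) u))" unfolding e1 e2 ..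
  also have "\<dots> = ad ?D2 (ad ?D2 (mu Q ?Pv y P) (mu ?E Sv (sm ?E (sgn_deg ?E) x) S))
          (ad ?D2 (sm ?D2 (sgn_deg Q) u) (sm ?D2 (- sgn_deg Q) u))"
    using x y P S u by (simp add: add_assoc add_left_commute ac_simps)
  also have "\<dots> = ad ?D2 (mu Q ?Pv y P) (mu ?E Sv (sm ?E (sgn_deg ?E) x) S)"
    using x y P S u by (simp add: smul_cancel ac_simps)
  finally show ?thesis unfolding degs .
qed

text \<open>Shifting each \<open>\<xi> j\<close> by \<open>c b j\<close> with \<open>|c| = p - 1\<close> odd leaves the Massey sum unchanged,
  because \<open>c c = 0\<close>.\<close>

lemma msum_shift:
  assumes p: "even p" and c: "c \<in> C (p - 1)"
    and xb: "\<forall>j\<in>set js. \<xi> j \<in> C (xi_deg p q j) \<and> b j \<in> C (q j)"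
  shows "xi_prod A p q (\<lambda>j. ad (xi_deg p q j) (\<xi> j) (mu (p - 1) (q j) c (b j))) js
           = ad (prod_deg p q js) (xi_prod A p q \<xi> js)
               (mu (p - 1) (msum_deg p q js) c (msum A p q b \<xi> js))
       \<and> msum A p q b (\<lambda>j. ad (xi_deg p q j) (\<xi> j) (mu (p - 1) (q j) c (b j))) js
           = msum A p q b \<xi> js"
  using xb
proof (induction js)
  case Nil
  have "mu (p - 1) (msum_deg p q []) c (z0 (msum_deg p q [])) = z0 0"
    using c by (simp add: msum_deg_def)
  thus ?case by simp
next
  case (Cons j js)
  let ?\<xi>' = "\<lambda>j. ad (xi_deg p q j) (\<xi> j) (mu (p - 1) (q j) c (b j))"
  have IH: "xi_prod A p q ?\<xi>' js = ad (prod_deg p q js) (xi_prod A p q \<xi> js)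
      (mu (p - 1) (msum_deg p q js) c (msum A p q b \<xi> js))"
      "msum A p q b ?\<xi>' js = msum A p q b \<xi> js" using Cons by auto
  have xj: "\<xi> j \<in> C (xi_deg p q j)" "b j \<in> C (q j)" using Cons.prems by auto
  have PS: "xi_prod A p q \<xi> js \<in> C (prod_deg p q js)" "msum A p q b \<xi> js \<in> C (msum_deg p q js)"
    using Cons.prems by (auto intro!: xi_prod_C msum_C)
  have g: "odd (p - 1)" using p by simp
  show ?case
  proof
    show "xi_prod A p q ?\<xi>' (j # js) = ad (prod_deg p q (j # js)) (xi_prod A p q \<xi> (j # js))
        (mu (p - 1) (msum_deg p q (j # js)) c (msum A p q b \<xi> (j # js)))"
      unfolding xi_prod.simps msum.simps IH(1)
      by (rule xi_prod_shift_step[OF _ _ _ _ g xj(1) xj(2) c PS])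
          (auto simp: xi_deg_def msum_deg_def)
    show "msum A p q b ?\<xi>' (j # js) = msum A p q b \<xi> (j # js)"
      unfolding msum.simps IH
      by (rule msum_shift_step[OF _ _ _ g xj(1) xj(2) c PS]) (auto simp: xi_deg_def msum_deg_def)
  qed
qed

lemma xi_prod_change_b_step:
  assumes degs: "E = p - 1 + Q" "Pv = p - 1 + Sv" "D = E + Pv" "Rd = E + Sv - 1"
    and p: "even p" and a: "a \<in> C p" and x': "x' \<in> C E" and \<gamma>: "\<gamma> \<in> C (Q - 1)"
    and P': "P' \<in> C Pv" and R: "R \<in> C (Sv - 1)"
    and hP: "P = ad Pv P' (mu p (Sv - 1) a R)"
  shows "mu E Pv (ad E x' (mu p (Q - 1) a \<gamma>)) P
    = ad D (mu E Pv x' P') (mu p Rd a (ad Rd (mu E (Sv - 1) x' R) (mu (Q - 1) Pv \<gamma> P)))"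
proof -
  note x' = x'[unfolded degs] and P' = P'[unfolded degs] and hP = hP[unfolded degs]
  let ?E = "p - 1 + Q" and ?Pv = "p - 1 + Sv"
    and ?D = "p - 1 + Q + (p - 1 + Sv)" and ?R = "p - 1 + Q + Sv - 1"
  have aR: "mu p (Sv - 1) a R \<in> C ?Pv" using a R by auto
  have P: "P \<in> C ?Pv" unfolding hP using P' aR by simp
  have a\<gamma>: "mu p (Q - 1) a \<gamma> \<in> C ?E" using a \<gamma> by auto
  have "mu ?E ?Pv (ad ?E x' (mu p (Q - 1) a \<gamma>)) P = ad ?D (mu ?E ?Pv x' P)
      (mu ?E ?Pv (mu p (Q - 1) a \<gamma>) P)"
    using x' a\<gamma> P by (rule mul_add_left_deg) simp
  also have "mu ?E ?Pv x' P = ad ?D (mu ?E ?Pv x' P') (mu ?E ?Pv x' (mu p (Sv - 1) a R))"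
    unfolding hP using x' P' aR by (rule mul_add_right_deg) simp
  also have "mu ?E ?Pv x' (mu p (Sv - 1) a R) = mu (?E + p) (Sv - 1) (mu ?E p x' a) R"
    using x' a R by (rule mul_assoc[symmetric]) auto
  also have "mu ?E p x' a = mu p ?E a x'" using p a x' by (rule mul_comm_even)
  also have "mu (?E + p) (Sv - 1) (mu p ?E a x') R = mu p ?R a (mu ?E (Sv - 1) x' R)"
    using a x' R by (rule mul_assoc) auto
  also have "mu ?E ?Pv (mu p (Q - 1) a \<gamma>) P = mu p ?R a (mu (Q - 1) ?Pv \<gamma> P)"
    using a \<gamma> P by (rule mul_assoc) auto
  also have "ad ?D (ad ?D (mu ?E ?Pv x' P') (mu p ?R a (mu ?E (Sv - 1) x' R)))
      (mu p ?R a (mu (Q - 1) ?Pv \<gamma> P))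
     = ad ?D (mu ?E ?Pv x' P') (ad ?D (mu p ?R a (mu ?E (Sv - 1) x' R))
         (mu p ?R a (mu (Q - 1) ?Pv \<gamma> P)))"
    using x' P' a R \<gamma> P by (intro add_assoc) auto
  also have "ad ?D (mu p ?R a (mu ?E (Sv - 1) x' R)) (mu p ?R a (mu (Q - 1) ?Pv \<gamma> P))
     = mu p ?R a (ad ?R (mu ?E (Sv - 1) x' R) (mu (Q - 1) ?Pv \<gamma> P))"
    using a x' R \<gamma> P by (subst mul_add_right_deg[where m = ?D]) auto
  finally show ?thesis unfolding degs .
qed

lemma leibniz_primitive_left:
  assumes degs: "E = p - 1 + Q" "Pv = p - 1 + Sv" "D = E + Sv" "Rd = E + Sv - 1"
    and p: "even p" and a: "a \<in> C p" and x: "x \<in> C E" and y: "y \<in> C Q" and R: "R \<in> C (Sv - 1)"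
    and dx: "dd E x = mu p Q a y"
  shows "dd Rd (mu E (Sv - 1) x R) =
    ad D (mu Q Pv y (mu p (Sv - 1) a R)) (mu E Sv (sm E (sgn_deg E) x) (dd (Sv - 1) R))"
proof -
  note x = x[unfolded degs] and dx = dx[unfolded degs]
  let ?E = "p - 1 + Q" and ?D = "p - 1 + Q + Sv" and ?R = "p - 1 + Q + Sv - 1"
  have "dd ?R (mu ?E (Sv - 1) x R) = ad ?D (mu (?E + 1) (Sv - 1) (dd ?E x) R)
      (sm ?D (sgn_deg ?E) (mu ?E (Sv - 1 + 1) x (dd (Sv - 1) R)))"
    using x R by (rule leibniz) auto
  also have "sm ?D (sgn_deg ?E) (mu ?E (Sv - 1 + 1) x (dd (Sv - 1) R))
      = mu ?E Sv (sm ?E (sgn_deg ?E) x) (dd (Sv - 1) R)"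
    using x R by (simp add: mul_smul_left d_closed)
  also have "mu (?E + 1) (Sv - 1) (dd ?E x) R = mu (p + Q) (Sv - 1) (mu p Q a y) R"
    unfolding dx by (simp add: ac_simps)
  also have "\<dots> = mu (Q + p) (Sv - 1) (mu Q p y a) R"
    using mul_comm_even[OF p a y] by (simp add: ac_simps)
  also have "\<dots> = mu Q (p - 1 + Sv) y (mu p (Sv - 1) a R)" using y a R by (rule mul_assoc) auto
  finally show ?thesis unfolding degs .
qed

lemma leibniz_primitive_right:
  assumes degs: "E = p - 1 + Q" "Pv = p - 1 + Sv" "D = E + Sv" "Rd = E + Sv - 1"
    and p: "even p" and a: "a \<in> C p" and \<gamma>: "\<gamma> \<in> C (Q - 1)" and P: "P \<in> C Pv" and S: "S \<in> C Sv"
    and dP: "dd Pv P = mu p Sv a S"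
  shows "dd Rd (mu (Q - 1) Pv \<gamma> P) =
    ad D (mu Q Pv (dd (Q - 1) \<gamma>) P) (mu E Sv (sm E (sgn_deg E) (mu p (Q - 1) a \<gamma>)) S)"
proof -
  note P = P[unfolded degs] and dP = dP[unfolded degs]
  let ?E = "p - 1 + Q" and ?Pv = "p - 1 + Sv"
    and ?D = "p - 1 + Q + Sv" and ?R = "p - 1 + Q + Sv - 1"
  have "dd ?R (mu (Q - 1) ?Pv \<gamma> P) = ad ?D (mu (Q - 1 + 1) ?Pv (dd (Q - 1) \<gamma>) P)
      (sm ?D (sgn_deg (Q - 1)) (mu (Q - 1) (?Pv + 1) \<gamma> (dd ?Pv P)))"
    using \<gamma> P by (rule leibniz) auto
  also have "mu (Q - 1 + 1) ?Pv (dd (Q - 1) \<gamma>) P = mu Q ?Pv (dd (Q - 1) \<gamma>) P" by simp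
  also have "sgn_deg (Q - 1) = sgn_deg ?E" using p by (simp add: sgn_deg_def)
  also have "mu (Q - 1) (?Pv + 1) \<gamma> (dd ?Pv P) = mu (Q - 1 + p) Sv (mu (Q - 1) p \<gamma> a) S"
    unfolding dP using \<gamma> a S by (rule mul_assoc[symmetric]) auto
  also have "mu (Q - 1) p \<gamma> a = mu p (Q - 1) a \<gamma>" using p a \<gamma> by (rule mul_comm_even)
  also have "Q - 1 + p = ?E" by simp
  also have "sm ?D (sgn_deg ?E) (mu ?E Sv (mu p (Q - 1) a \<gamma>) S)
      = mu ?E Sv (sm ?E (sgn_deg ?E) (mu p (Q - 1) a \<gamma>)) S"
    using a \<gamma> S by (simp add: mul_smul_left mul_closed)
  finally show ?thesis unfolding degs .
qed

lemma msum_change_b_step: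
  assumes degs: "E = p - 1 + Q" "Pv = p - 1 + Sv" "D2 = E + Sv" "Rd = E + Sv - 1"
    and p: "even p" and a: "a \<in> C p" and x': "x' \<in> C E" and y': "y' \<in> C Q"
    and \<gamma>: "\<gamma> \<in> C (Q - 1)" and P': "P' \<in> C Pv" and S': "S' \<in> C Sv" and R: "R \<in> C (Sv - 1)"
    and dx': "dd E x' = mu p Q a y'"
    and hP: "P = ad Pv P' (mu p (Sv - 1) a R)" and hS: "S = ad Sv S' (dd (Sv - 1) R)"
    and dP: "dd Pv P = mu p Sv a S"
  shows "ad D2 (mu Q Pv (ad Q y' (dd (Q - 1) \<gamma>)) P)
      (mu E Sv (sm E (sgn_deg E) (ad E x' (mu p (Q - 1) a \<gamma>))) S)
    = ad D2 (ad D2 (mu Q Pv y' P') (mu E Sv (sm E (sgn_deg E) x') S'))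
        (dd Rd (ad Rd (mu E (Sv - 1) x' R) (mu (Q - 1) Pv \<gamma> P)))"
proof -
  note x' = x'[unfolded degs] and P' = P'[unfolded degs] and dx' = dx'[unfolded degs]
    and hP = hP[unfolded degs] and dP = dP[unfolded degs]
  let ?E = "p - 1 + Q" and ?Pv = "p - 1 + Sv"
    and ?D = "p - 1 + Q + Sv" and ?R = "p - 1 + Q + Sv - 1"
  let ?s = "sgn_deg ?E"
  have aR: "mu p (Sv - 1) a R \<in> C ?Pv" using a R by auto
  have dR: "dd (Sv - 1) R \<in> C Sv" using R by auto
  have P: "P \<in> C ?Pv" unfolding hP using P' aR by simp
  have S: "S \<in> C Sv" unfolding hS using S' dR by simp
  have a\<gamma>: "mu p (Q - 1) a \<gamma> \<in> C ?E" using a \<gamma> by auto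
  have d\<gamma>: "dd (Q - 1) \<gamma> \<in> C Q" using \<gamma> by auto
  have sx': "sm ?E ?s x' \<in> C ?E" using x' by simp
  have sa\<gamma>: "sm ?E ?s (mu p (Q - 1) a \<gamma>) \<in> C ?E" using a\<gamma> by simp
  define u1 where "u1 = mu Q ?Pv y' P'"
  define u2 where "u2 = mu Q ?Pv y' (mu p (Sv - 1) a R)"
  define u3 where "u3 = mu Q ?Pv (dd (Q - 1) \<gamma>) P"
  define u4 where "u4 = mu ?E Sv (sm ?E ?s x') S'"
  define u5 where "u5 = mu ?E Sv (sm ?E ?s x') (dd (Sv - 1) R)"
  define u6 where "u6 = mu ?E Sv (sm ?E ?s (mu p (Q - 1) a \<gamma>)) S"
  have us: "u1 \<in> C ?D" "u2 \<in> C ?D" "u3 \<in> C ?D" "u4 \<in> C ?D" "u5 \<in> C ?D" "u6 \<in> C ?D"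
    unfolding u1_def u2_def u3_def u4_def u5_def u6_def
    using y' P' aR d\<gamma> P sx' S' dR sa\<gamma> S by auto
  have L: "ad ?D (mu Q ?Pv (ad Q y' (dd (Q - 1) \<gamma>)) P)
      (mu ?E Sv (sm ?E ?s (ad ?E x' (mu p (Q - 1) a \<gamma>))) S)
      = ad ?D (ad ?D (ad ?D u1 u2) u3) (ad ?D (ad ?D u4 u5) u6)"
  proof -
    have "mu Q ?Pv (ad Q y' (dd (Q - 1) \<gamma>)) P = ad ?D (mu Q ?Pv y' P) u3"
      unfolding u3_def using y' d\<gamma> P by (rule mul_add_left_deg) simp
    also have "mu Q ?Pv y' P = ad ?D u1 u2"
      unfolding hP u1_def u2_def using y' P' aR by (rule mul_add_right_deg) simp
    finally have 1: "mu Q ?Pv (ad Q y' (dd (Q - 1) \<gamma>)) P = ad ?D (ad ?D u1 u2) u3" .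
    have "mu ?E Sv (sm ?E ?s (ad ?E x' (mu p (Q - 1) a \<gamma>))) S
        = mu ?E Sv (ad ?E (sm ?E ?s x') (sm ?E ?s (mu p (Q - 1) a \<gamma>))) S"
      using x' a\<gamma> by (simp add: smul_add)
    also have "\<dots> = ad ?D (mu ?E Sv (sm ?E ?s x') S) u6"
      unfolding u6_def using sx' sa\<gamma> S by (rule mul_add_left_deg) simp
    also have "mu ?E Sv (sm ?E ?s x') S = ad ?D u4 u5"
      unfolding hS u4_def u5_def using sx' S' dR by (rule mul_add_right_deg) simp
    finally have 2: "mu ?E Sv (sm ?E ?s (ad ?E x' (mu p (Q - 1) a \<gamma>))) S = ad ?D (ad ?D u4 u5) u6" .
    show ?thesis unfolding 1 2 ..
  qed
  have F3: "dd ?R (mu ?E (Sv - 1) x' R) = ad ?D u2 u5"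
    unfolding u2_def u5_def by (rule leibniz_primitive_left[OF refl refl refl refl p a x' y' R dx'])
  have F4: "dd ?R (mu (Q - 1) ?Pv \<gamma> P) = ad ?D u3 u6"
    unfolding u3_def u6_def by (rule leibniz_primitive_right[OF refl refl refl refl p a \<gamma> P S dP])
  have "dd ?R (ad ?R (mu ?E (Sv - 1) x' R) (mu (Q - 1) ?Pv \<gamma> P))
      = ad ?D (dd ?R (mu ?E (Sv - 1) x' R)) (dd ?R (mu (Q - 1) ?Pv \<gamma> P))"
    using x' R \<gamma> P by (intro d_add_deg) auto
  hence Rr: "dd ?R (ad ?R (mu ?E (Sv - 1) x' R) (mu (Q - 1) ?Pv \<gamma> P))
      = ad ?D (ad ?D u2 u5) (ad ?D u3 u6)"
    unfolding F3 F4 .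
  show ?thesis unfolding degs L Rr u1_def[symmetric] u4_def[symmetric] using us
    by (rule add_rearrange_6)
qed

lemma msum_change_b:
  assumes p: "even p" and a: "a \<in> C p"
    and sys': "defining_system A p q a b' \<xi>' (set js)"
    and sys: "defining_system A p q a b \<xi> (set js)"
    and \<gamma>: "\<forall>j\<in>set js. \<gamma> j \<in> C (q j - 1) \<and> \<xi> j = ad (xi_deg p q j) (\<xi>' j) (mu p (q j - 1) a (\<gamma> j))
        \<and> b j = ad (q j) (b' j) (dd (q j - 1) (\<gamma> j))"
  shows "msum_primitive A p q \<xi>' \<gamma> \<xi> js \<in> C (msum_deg p q js - 1)
       \<and> xi_prod A p q \<xi> js = ad (prod_deg p q js) (xi_prod A p q \<xi>' js)
           (mu p (msum_deg p q js - 1) a (msum_primitive A p q \<xi>' \<gamma> \<xi> js))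
       \<and> msum A p q b \<xi> js = ad (msum_deg p q js) (msum A p q b' \<xi>' js)
           (dd (msum_deg p q js - 1) (msum_primitive A p q \<xi>' \<gamma> \<xi> js))"
  using sys' sys \<gamma>
proof (induction js)
  case Nil
  have "mu p (msum_deg p q [] - 1) a (z0 (msum_deg p q [] - 1)) = z0 0" using a
    by (simp add: msum_deg_def)
  moreover have "dd (msum_deg p q [] - 1) (z0 (msum_deg p q [] - 1)) = z0 (msum_deg p q [])" by simp
  ultimately show ?case by simp
next
  case (Cons j js)
  let ?R = "msum_primitive A p q \<xi>' \<gamma> \<xi> js"
  have IH: "?R \<in> C (msum_deg p q js - 1)"
    "xi_prod A p q \<xi> js = ad (prod_deg p q js) (xi_prod A p q \<xi>' js)
        (mu p (msum_deg p q js - 1) a ?R)"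
    "msum A p q b \<xi> js = ad (msum_deg p q js) (msum A p q b' \<xi>' js) (dd (msum_deg p q js - 1) ?R)"
    using Cons by (auto simp: defining_system_def)
  note j' = defining_systemD[OF Cons.prems(1) list.set_intros(1)] and j = defining_systemD[OF
      Cons.prems(2) list.set_intros(1)]
  have \<gamma>j: "\<gamma> j \<in> C (q j - 1)" "\<xi> j = ad (xi_deg p q j) (\<xi>' j) (mu p (q j - 1) a (\<gamma> j))"
    "b j = ad (q j) (b' j) (dd (q j - 1) (\<gamma> j))" using Cons.prems(3) by auto
  have PS: "xi_prod A p q \<xi>' js \<in> C (prod_deg p q js)" "msum A p q b' \<xi>' js \<in> C (msum_deg p q js)"
    using defining_system_C[OF Cons.prems(1)] by (auto intro!: xi_prod_C msum_C)
  have P: "xi_prod A p q \<xi> js \<in> C (prod_deg p q js)"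
    using defining_system_C[OF Cons.prems(2)] by (auto intro!: xi_prod_C)
  have sys_js: "defining_system A p q a b \<xi> (set js)"
    using Cons.prems(2) by (simp add: defining_system_def)
  have dP: "dd (prod_deg p q js) (xi_prod A p q \<xi> js) = mu p (msum_deg p q js) a
      (msum A p q b \<xi> js)"
    using d_xi_prod_msum[OF p a sys_js] by simp
  show ?case
  proof (intro conjI)
    show "msum_primitive A p q \<xi>' \<gamma> \<xi> (j # js) \<in> C (msum_deg p q (j # js) - 1)"
      using j' \<gamma>j IH(1) P by (auto simp: msum_deg_def xi_deg_def)
    show "xi_prod A p q \<xi> (j # js) = ad (prod_deg p q (j # js)) (xi_prod A p q \<xi>' (j # js))
        (mu p (msum_deg p q (j # js) - 1) a (msum_primitive A p q \<xi>' \<gamma> \<xi> (j # js)))"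
      unfolding xi_prod.simps msum_primitive.simps \<gamma>j(2)
      by (rule xi_prod_change_b_step[OF _ _ _ _ p a j'(3) \<gamma>j(1) PS(1) IH(1) IH(2)])
        (auto simp: xi_deg_def msum_deg_def)
    show "msum A p q b \<xi> (j # js) = ad (msum_deg p q (j # js)) (msum A p q b' \<xi>' (j # js))
        (dd (msum_deg p q (j # js) - 1) (msum_primitive A p q \<xi>' \<gamma> \<xi> (j # js)))"
      unfolding msum.simps msum_primitive.simps \<gamma>j(2) \<gamma>j(3)
      by (rule msum_change_b_step[OF _ _ _ _ p a j'(3) j'(1) \<gamma>j(1) PS IH(1) j'(4) IH(2) IH(3) dP])
        (auto simp: xi_deg_def msum_deg_def)
  qed
qed

lemma d_xi_change_a:
  assumes x: "x \<in> C (p + Q - 1)" and y: "y \<in> Z Q" and aT: "aT \<in> C p" and e: "\<epsilon> \<in> C (p - 1)"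
    and dx: "dd (p + Q - 1) x = mu p Q aT y"
  shows "dd (p + Q - 1) (ad (p + Q - 1) x (mu (p - 1) Q \<epsilon> y)) = mu p Q (ad p aT (dd (p - 1) \<epsilon>)) y"
proof -
  have yC: "y \<in> C Q" and dy: "dd Q y = z0 (Q + 1)" using y by (auto simp: Z_iff)
  have "dd (p + Q - 1) (ad (p + Q - 1) x (mu (p - 1) Q \<epsilon> y))
      = ad (p + Q) (dd (p + Q - 1) x) (dd (p + Q - 1) (mu (p - 1) Q \<epsilon> y))"
    using x e yC by (intro d_add_deg) auto
  also have "dd (p + Q - 1) (mu (p - 1) Q \<epsilon> y) = ad (p + Q) (mu (p - 1 + 1) Q (dd (p - 1) \<epsilon>) y)
      (sm (p + Q) (sgn_deg (p - 1)) (mu (p - 1) (Q + 1) \<epsilon> (dd Q y)))"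
    using e yC by (rule leibniz) auto
  also have "\<dots> = mu p Q (dd (p - 1) \<epsilon>) y" using e yC dy by (simp add: mul_closed)
  also have "ad (p + Q) (dd (p + Q - 1) x) (mu p Q (dd (p - 1) \<epsilon>) y) = mu p Q
      (ad p aT (dd (p - 1) \<epsilon>)) y"
    unfolding dx using aT e yC by (subst mul_add_left_deg) auto
  finally show ?thesis .
qed

lemma d_xi_change_b:
  assumes p: "even p" and x: "x \<in> C (p + Q - 1)" and a: "a \<in> Z p" and g: "\<gamma> \<in> C (Q - 1)"
    and y: "y \<in> C Q" and dx: "dd (p + Q - 1) x = mu p Q a y"
  shows "dd (p + Q - 1) (ad (p + Q - 1) x (mu p (Q - 1) a \<gamma>)) = mu p Q a (ad Q y (dd (Q - 1) \<gamma>))"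
proof -
  have aC: "a \<in> C p" and da: "dd p a = z0 (p + 1)" using a by (auto simp: Z_iff)
  have "dd (p + Q - 1) (ad (p + Q - 1) x (mu p (Q - 1) a \<gamma>))
      = ad (p + Q) (dd (p + Q - 1) x) (dd (p + Q - 1) (mu p (Q - 1) a \<gamma>))"
    using x aC g by (intro d_add_deg) auto
  also have "dd (p + Q - 1) (mu p (Q - 1) a \<gamma>) = ad (p + Q) (mu (p + 1) (Q - 1) (dd p a) \<gamma>)
      (sm (p + Q) (sgn_deg p) (mu p (Q - 1 + 1) a (dd (Q - 1) \<gamma>)))"
    using aC g by (rule leibniz) auto
  also have "\<dots> = mu p Q a (dd (Q - 1) \<gamma>)" using aC g da p by (simp add: mul_closed)
  also have "ad (p + Q) (dd (p + Q - 1) x) (mu p Q a (dd (Q - 1) \<gamma>)) = mu p Q a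
      (ad Q y (dd (Q - 1) \<gamma>))"
    unfolding dx using aC y g by (subst mul_add_right_deg) auto
  finally show ?thesis .
qed

lemma defining_system_change_a:
  assumes sys: "defining_system A p q a b \<xi> I" and a: "a \<in> C p" and \<epsilon>: "\<epsilon> \<in> C (p - 1)"
  shows "defining_system A p q (ad p a (dd (p - 1) \<epsilon>)) b
    (\<lambda>j. ad (xi_deg p q j) (\<xi> j) (mu (p - 1) (q j) \<epsilon> (b j))) I"
  using sys d_xi_change_a[OF _ _ a \<epsilon>] \<epsilon>
  by (auto simp: defining_system_def xi_deg_def Z_iff)

lemma defining_system_change_b:
  assumes p: "even p" and a: "a \<in> Z p" and sys: "defining_system A p q a b \<xi> I"
    and \<gamma>: "\<forall>j\<in>I. \<gamma> j \<in> C (q j - 1)"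
  shows "defining_system A p q a (\<lambda>j. ad (q j) (b j) (dd (q j - 1) (\<gamma> j)))
    (\<lambda>j. ad (xi_deg p q j) (\<xi> j) (mu p (q j - 1) a (\<gamma> j))) I"
  unfolding defining_system_def
proof
  fix j assume "j \<in> I"
  note j = defining_systemD[OF sys this] and \<gamma>j = \<gamma>[rule_format, OF this]
  have "dd (q j - 1) (\<gamma> j) \<in> Z (q j)"
    using \<gamma>j by (intro B_Z) (auto simp: B_iff)
  hence "ad (q j) (b j) (dd (q j - 1) (\<gamma> j)) \<in> Z (q j)"
    using j by (intro Z_add) (auto simp: Z_iff)
  moreover have "ad (xi_deg p q j) (\<xi> j) (mu p (q j - 1) a (\<gamma> j)) \<in> C (xi_deg p q j)"
    using j \<gamma>j a by (auto simp: xi_deg_def Z_iff)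
  moreover have "dd (xi_deg p q j) (ad (xi_deg p q j) (\<xi> j) (mu p (q j - 1) a (\<gamma> j)))
      = mu p (q j) a (ad (q j) (b j) (dd (q j - 1) (\<gamma> j)))"
    using d_xi_change_b[OF p _ a \<gamma>j j(1)] j by (simp add: xi_deg_def)
  ultimately show "ad (q j) (b j) (dd (q j - 1) (\<gamma> j)) \<in> Z (q j) \<and>
      ad (xi_deg p q j) (\<xi> j) (mu p (q j - 1) a (\<gamma> j)) \<in> C (xi_deg p q j) \<and>
      dd (xi_deg p q j) (ad (xi_deg p q j) (\<xi> j) (mu p (q j - 1) a (\<gamma> j)))
        = mu p (q j) a (ad (q j) (b j) (dd (q j - 1) (\<gamma> j)))"
    by blast
qed

text \<open>First \<open>\<xi> j\<close> is shifted by \<open>\<epsilon> b j\<close>, which leaves the Massey sum unchanged, then by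
  \<open>a \<gamma> j\<close>, which changes it by a coboundary.\<close>

lemma msum_exact_transfer:
  assumes p: "even p" and a0: "a0 \<in> Z p" and \<epsilon>: "\<epsilon> \<in> C (p - 1)" and a: "a = ad p a0 (dd (p - 1) \<epsilon>)"
    and sys: "defining_system A p q a0 b0 \<xi>0 (set js)"
    and \<gamma>: "\<forall>j\<in>set js. \<gamma> j \<in> C (q j - 1) \<and> b j = ad (q j) (b0 j) (dd (q j - 1) (\<gamma> j))"
    and exact: "msum A p q b0 \<xi>0 js \<in> B (msum_deg p q js)"
  obtains \<xi> where "defining_system A p q a b \<xi> (set js)"
    and "msum A p q b \<xi> js \<in> B (msum_deg p q js)"
proof
  have a0C: "a0 \<in> C p" using a0 by (simp add: Z_iff)
  have aZ: "a \<in> Z p" unfolding a using \<epsilon> by (intro Z_add[OF a0] B_Z) (auto simp: B_iff)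
  hence aC: "a \<in> C p" by (simp add: Z_iff)
  define \<xi>1 where "\<xi>1 j = ad (xi_deg p q j) (\<xi>0 j) (mu (p - 1) (q j) \<epsilon> (b0 j))" for j
  define \<xi> where "\<xi> j = ad (xi_deg p q j) (\<xi>1 j) (mu p (q j - 1) a (\<gamma> j))" for j
  have sys1: "defining_system A p q a b0 \<xi>1 (set js)"
    unfolding a \<xi>1_def by (rule defining_system_change_a[OF sys a0C \<epsilon>])
  have "defining_system A p q a (\<lambda>j. ad (q j) (b0 j) (dd (q j - 1) (\<gamma> j))) \<xi> (set js)"
    unfolding \<xi>_def using defining_system_change_b[OF p aZ sys1] \<gamma> by blast
  thus sys2: "defining_system A p q a b \<xi> (set js)"
    using \<gamma> by (simp add: defining_system_def)
  have shift: "msum A p q b0 \<xi>1 js = msum A p q b0 \<xi>0 js"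
    unfolding \<xi>1_def using msum_shift[OF p \<epsilon>] defining_system_C[OF sys] by blast
  let ?R = "msum_primitive A p q \<xi>1 \<gamma> \<xi> js"
  have R: "?R \<in> C (msum_deg p q js - 1)"
    and change: "msum A p q b \<xi> js = ad (msum_deg p q js) (msum A p q b0 \<xi>1 js)
        (dd (msum_deg p q js - 1) ?R)"
    using msum_change_b[OF p aC sys1 sys2] \<gamma> by (auto simp: \<xi>_def)
  have "dd (msum_deg p q js - 1) ?R \<in> B (msum_deg p q js)"
    unfolding B_iff using R by auto
  thus "msum A p q b \<xi> js \<in> B (msum_deg p q js)"
    unfolding change shift by (intro B_add exact)
qed

end

section \<open>Massey sums under morphisms and in cohomology\<close>

context dg_algebra
begin

lemma hom_xi_prod:
  assumes f: "dga_hom A Y f" and h: "\<forall>j\<in>set js. \<xi> j \<in> C (xi_deg p q j)"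
  shows "f (prod_deg p q js) (xi_prod A p q \<xi> js) = xi_prod Y p q (\<lambda>j. f (xi_deg p q j) (\<xi> j)) js"
  using h
proof (induction js)
  case Nil thus ?case using hom_unit[OF f] by simp
next
  case (Cons j js)
  have "xi_prod A p q \<xi> js \<in> C (prod_deg p q js)" using Cons.prems by (intro xi_prod_C) auto
  thus ?case using Cons by (simp add: hom_mul[OF f])
qed

lemma hom_msum:
  assumes f: "dga_hom A Y f" and h: "\<forall>j\<in>set js. \<xi> j \<in> C (xi_deg p q j) \<and> b j \<in> C (q j)"
    and z: "\<And>k. f k (z0 k) = dzero Y k"
  shows "f (msum_deg p q js) (msum A p q b \<xi> js) = msum Y p q (\<lambda>j. f (q j) (b j))
      (\<lambda>j. f (xi_deg p q j) (\<xi> j)) js"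
  using h
proof (induction js)
  case Nil thus ?case using z by simp
next
  case (Cons j js)
  have xj: "\<xi> j \<in> C (xi_deg p q j)" "b j \<in> C (q j)" using Cons.prems by auto
  have hs: "\<forall>j\<in>set js. \<xi> j \<in> C (xi_deg p q j) \<and> b j \<in> C (q j)" using Cons.prems by auto
  have P: "xi_prod A p q \<xi> js \<in> C (prod_deg p q js)" using hs by (intro xi_prod_C) auto
  have S: "msum A p q b \<xi> js \<in> C (msum_deg p q js)" using hs by (intro msum_C) auto
  have sx: "sm (xi_deg p q j) (sgn_deg (xi_deg p q j)) (\<xi> j) \<in> C (xi_deg p q j)" using xj by simp
  have "f (msum_deg p q (j # js)) (msum A p q b \<xi> (j # js))
     = dadd Y (msum_deg p q (j # js)) (f (msum_deg p q (j # js))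
         (mu (q j) (prod_deg p q js) (b j) (xi_prod A p q \<xi> js)))
         (f (msum_deg p q (j # js)) (mu (xi_deg p q j) (msum_deg p q js)
             (sm (xi_deg p q j) (sgn_deg (xi_deg p q j)) (\<xi> j)) (msum A p q b \<xi> js)))"
    unfolding msum.simps using xj P S sx
    by (intro hom_add[OF f]) (auto simp: msum_deg_def xi_deg_def)
  also have "f (msum_deg p q (j # js)) (mu (q j) (prod_deg p q js) (b j) (xi_prod A p q \<xi> js))
     = dmul Y (q j) (prod_deg p q js) (f (q j) (b j))
         (xi_prod Y p q (\<lambda>j. f (xi_deg p q j) (\<xi> j)) js)"
    using xj P hs by (subst hom_mul[OF f]) (auto simp: msum_deg_Cons hom_xi_prod[OF f])
  also have "f (msum_deg p q (j # js)) (mu (xi_deg p q j) (msum_deg p q js)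
      (sm (xi_deg p q j) (sgn_deg (xi_deg p q j)) (\<xi> j)) (msum A p q b \<xi> js))
     = dmul Y (xi_deg p q j) (msum_deg p q js)
         (dsmul Y (xi_deg p q j) (sgn_deg (xi_deg p q j)) (f (xi_deg p q j) (\<xi> j)))
         (msum Y p q (\<lambda>j. f (q j) (b j)) (\<lambda>j. f (xi_deg p q j) (\<xi> j)) js)"
    using xj S sx hs Cons.IH by (subst hom_mul[OF f]) (auto simp: msum_deg_Cons' hom_smul[OF f])
  finally show ?case by simp
qed

lemma xi_prod_H_C:
  "\<forall>j\<in>set js. \<xi> j \<in> dcar H (xi_deg p q j) \<Longrightarrow> xi_prod H p q \<xi> js \<in> dcar H (prod_deg p q js)"
proof (induction js)
  case Nil thus ?case using H_unit_C by simp
next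
  case (Cons j js) thus ?case using H_mul_C by simp
qed

lemma msum_H_C:
  "\<forall>j\<in>set js. \<xi> j \<in> dcar H (xi_deg p q j) \<and> b j \<in> dcar H (q j) \<Longrightarrow>
    msum H p q b \<xi> js \<in> dcar H (msum_deg p q js)"
proof (induction js)
  case Nil thus ?case by (simp add: H_zero)
next
  case (Cons j js)
  have P: "xi_prod H p q \<xi> js \<in> dcar H (prod_deg p q js)" using Cons.prems
    by (intro xi_prod_H_C) auto
  have S: "msum H p q b \<xi> js \<in> dcar H (msum_deg p q js)" using Cons by auto
  have 1: "dmul H (q j) (prod_deg p q js) (b j) (xi_prod H p q \<xi> js) \<in> dcar H
      (msum_deg p q (j # js))"
    using H_mul_C[of "b j" "q j" "xi_prod H p q \<xi> js" "prod_deg p q js"] P Cons.prems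
        by (simp add: msum_deg_Cons)
  have 2: "dmul H (xi_deg p q j) (msum_deg p q js)
      (dsmul H (xi_deg p q j) (sgn_deg (xi_deg p q j)) (\<xi> j)) (msum H p q b \<xi> js)
      \<in> dcar H (msum_deg p q (j # js))"
    using H_mul_C[OF H_smul_C S, of "\<xi> j" "xi_deg p q j"] Cons.prems by (simp add: msum_deg_Cons')
  show ?case using H_add_C[OF 1 2] by simp
qed

lemma xi_prod_H_zero:
  assumes ne: "js \<noteq> []" and h: "\<forall>j\<in>set js. \<xi> j = zero_cls (xi_deg p q j)"
  shows "xi_prod H p q \<xi> js = zero_cls (prod_deg p q js)"
proof -
  obtain j js' where Cons: "js = j # js'" using ne by (cases js) auto
  have "xi_prod H p q \<xi> js' \<in> dcar H (prod_deg p q js')" using Cons h by (intro xi_prod_H_C) auto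
  thus ?thesis using Cons h by (simp add: H_mul_zero_left)
qed

lemma msum_H_zero:
  assumes len: "2 \<le> length js"
    and h: "\<forall>j\<in>set js. \<xi> j = zero_cls (xi_deg p q j) \<and> b j \<in> dcar H (q j)"
  shows "msum H p q b \<xi> js = zero_cls (msum_deg p q js)"
proof -
  obtain j js' where js: "js = j # js'" and ne: "js' \<noteq> []"
    using len by (cases js; cases "tl js") auto
  have P: "xi_prod H p q \<xi> js' = zero_cls (prod_deg p q js')" using ne h js
    by (intro xi_prod_H_zero) auto
  have S: "msum H p q b \<xi> js' \<in> dcar H (msum_deg p q js')" using h js by (intro msum_H_C) auto
  have xj: "\<xi> j = zero_cls (xi_deg p q j)" "b j \<in> dcar H (q j)" using h js by auto
  have 1: "dmul H (q j) (prod_deg p q js') (b j) (xi_prod H p q \<xi> js') = zero_cls (msum_deg p q js)"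
    unfolding P js using H_mul_zero_right[OF xj(2)] by (simp add: msum_deg_Cons)
  have 2: "dmul H (xi_deg p q j) (msum_deg p q js')
      (dsmul H (xi_deg p q j) (sgn_deg (xi_deg p q j)) (\<xi> j)) (msum H p q b \<xi> js')
      = zero_cls (msum_deg p q js)"
    unfolding xj(1) H_smul_zero js using H_mul_zero_left[OF S] by (simp add: msum_deg_Cons')
  show ?thesis unfolding js msum.simps 1[unfolded js] 2[unfolded js] H_add_zero ..
qed

end

context dg_algebra
begin

lemma hom_defining_system:
  assumes f: "dga_hom A Y f" and zero: "\<And>k y. y \<in> dcar Y k \<Longrightarrow> dsmul Y k 0 y = dzero Y k"
    and a: "a \<in> C p" and sys: "defining_system A p q a b \<xi> I"
  shows "defining_system Y p q (f p a) (\<lambda>j. f (q j) (b j)) (\<lambda>j. f (xi_deg p q j) (\<xi> j)) I"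
  unfolding defining_system_def
proof
  fix j assume "j \<in> I"
  note j = defining_systemD[OF sys this]
  have "ddiff Y (xi_deg p q j) (f (xi_deg p q j) (\<xi> j)) = f (p + q j) (mu p (q j) a (b j))"
    using hom_d[OF f j(3)] j(4) by (simp add: xi_deg_def)
  also have "\<dots> = dmul Y p (q j) (f p a) (f (q j) (b j))"
    using a j(1) by (rule hom_mul[OF f]) simp
  finally show "f (q j) (b j) \<in> cocycles Y (q j) \<and> f (xi_deg p q j) (\<xi> j) \<in> dcar Y (xi_deg p q j) \<and>
      ddiff Y (xi_deg p q j) (f (xi_deg p q j) (\<xi> j)) = dmul Y p (q j) (f p a) (f (q j) (b j))"
    using j hom_Z[OF f zero] hom_C[OF f] by (simp add: Z_iff)
qed

lemma zero_cls_in_massey: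
  assumes sys: "defining_system A p q a b \<xi> {1..n}"
    and exact: "msum A p q b \<xi> [1..<Suc n] \<in> B (msum_deg p q [1..<Suc n])"
  shows "zero_cls (massey_deg p n q) \<in> massey A p a n q b"
proof -
  have "massey_sum A p n q b \<xi> = msum A p q b \<xi> [1..<Suc n]"
    using defining_system_C[OF sys] by (rule massey_sum_eq_msum)
  hence "cls A (massey_deg p n q) (massey_sum A p n q b \<xi>) = zero_cls (massey_deg p n q)"
    using cls_B[OF exact] by (simp only: massey_deg_eq_msum_deg)
  moreover have "\<forall>i\<in>{1..n}. \<xi> i \<in> C (p + q i - 1) \<and> dd (p + q i - 1) (\<xi> i) = mu p (q i) a (b i)"
    using defining_systemD[OF sys] unfolding xi_deg_def by blast
  ultimately show ?thesis unfolding massey_def by blast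
qed

end

section \<open>Formality forces Massey products to vanish\<close>

lemma quasi_iso_lift:
  assumes "quasi_iso M A f" and "w \<in> cocycles A k"
  obtains z u where "z \<in> cocycles M k" and "u \<in> dcar A (k - 1)"
    and "w = dadd A k (f k z) (ddiff A (k - 1) u)"
  using assms unfolding quasi_iso_def coboundaries_def by blast

lemma quasi_iso_lift_family:
  assumes "quasi_iso M A f" and "\<forall>i\<in>I. w i \<in> cocycles A (k i)"
  obtains z u where "\<forall>i\<in>I. z i \<in> cocycles M (k i) \<and> u i \<in> dcar A (k i - 1) \<and>
    w i = dadd A (k i) (f (k i) (z i)) (ddiff A (k i - 1) (u i))"
proof -
  have "\<forall>i\<in>I. \<exists>zu. fst zu \<in> cocycles M (k i) \<and> snd zu \<in> dcar A (k i - 1) \<and>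
      w i = dadd A (k i) (f (k i) (fst zu)) (ddiff A (k i - 1) (snd zu))"
    by (metis assms quasi_iso_lift fst_conv snd_conv)
  then obtain F where "\<forall>i\<in>I. fst (F i) \<in> cocycles M (k i) \<and> snd (F i) \<in> dcar A (k i - 1) \<and>
      w i = dadd A (k i) (f (k i) (fst (F i))) (ddiff A (k i - 1) (snd (F i)))"
    by (metis bchoice)
  thus ?thesis by (intro that[of "fst \<circ> F" "snd \<circ> F"]) simp
qed

locale two_dgas = M: dg_algebra M + A: dg_algebra A
  for M :: "('m, 'c) dga_scheme" and A :: "('a, 'b) dga_scheme"
begin

lemma product_of_lifts_exact:
  assumes f: "dga_hom M A f" "quasi_iso M A f"
    and a': "a' \<in> M.Z p" and \<epsilon>: "\<epsilon> \<in> A.C (p - 1)" and a: "a = A.ad p (f p a') (A.dd (p - 1) \<epsilon>)"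
    and b': "b' \<in> M.Z Q" and \<gamma>: "\<gamma> \<in> A.C (Q - 1)" and b: "b = A.ad Q (f Q b') (A.dd (Q - 1) \<gamma>)"
    and exact: "A.mu p Q a b \<in> A.B (p + Q)"
  shows "M.mu p Q a' b' \<in> M.B (p + Q)"
proof -
  have fa: "f p a' \<in> A.Z p" and fb: "f Q b' \<in> A.Z Q"
    using M.hom_Z[OF f(1) A.smul_zero] a' b' by simp_all
  have "f (p + Q) (M.mu p Q a' b') = A.mu p Q (f p a') (f Q b')"
    using a' b' by (intro M.hom_mul[OF f(1)]) (auto simp: M.Z_iff)
  also have "\<dots> \<in> A.B (p + Q)"
    using A.mul_B_of_cohomologous[OF fa fb _ _ refl] exact \<epsilon> \<gamma> unfolding a b by (auto simp: A.B_iff)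
  finally show ?thesis
    using f(2) M.Z_mul[OF a' b' refl] unfolding quasi_iso_def by blast
qed

lemma primitive_with_zero_class:
  assumes g: "dga_hom M (cohom A) g" "quasi_iso M (cohom A) g" and x: "x \<in> M.C k"
  obtains z where "z \<in> M.Z k" and "g k (M.ad k x z) = A.zero_cls k"
proof -
  have X: "g k x \<in> dcar A.H k" using M.hom_C[OF g(1) x] .
  have "A.sm k (-1) (rep (g k x)) \<in> A.Z k" using A.rep_H(1)[OF X] by (rule A.Z_smul)
  hence "cls A k (A.sm k (-1) (rep (g k x))) \<in> cocycles A.H k"
    unfolding A.H_cocycles A.H_car by blast
  then obtain z where z: "z \<in> M.Z k"
    and eq: "cls A k (A.sm k (-1) (rep (g k x))) = dadd A.H k (g k z) (A.zero_cls k)"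
    using g(2) unfolding quasi_iso_def A.H_coboundaries by blast
  have zC: "z \<in> M.C k" using z by (simp add: M.Z_iff)
  have "g k (M.ad k x z) = dadd A.H k (g k x) (g k z)" using M.hom_add[OF g(1) x zC] .
  also have "\<dots> = A.zero_cls k" using A.H_add_eq_zero[OF X M.hom_C[OF g(1) zC] eq] .
  finally show ?thesis using that z by blast
qed

lemma defining_system_with_zero_classes:
  assumes g: "dga_hom M (cohom A) g" "quasi_iso M (cohom A) g"
    and exact: "\<forall>i\<in>I. b' i \<in> M.Z (q i) \<and> M.mu p (q i) a' (b' i) \<in> M.B (p + q i)"
  obtains \<xi> where "defining_system M p q a' b' \<xi> I"
    and "\<forall>i\<in>I. g (xi_deg p q i) (\<xi> i) = A.zero_cls (xi_deg p q i)"
proof -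
  have "\<exists>x. x \<in> M.C (xi_deg p q i) \<and> M.dd (xi_deg p q i) x = M.mu p (q i) a' (b' i) \<and>
      g (xi_deg p q i) x = A.zero_cls (xi_deg p q i)" if i: "i \<in> I" for i
  proof -
    obtain x where x: "x \<in> M.C (xi_deg p q i)" "M.dd (xi_deg p q i) x = M.mu p (q i) a' (b' i)"
      using exact i unfolding M.B_iff xi_deg_def by (auto simp: algebra_simps)
    obtain z where z: "z \<in> M.Z (xi_deg p q i)" "g (xi_deg p q i) (M.ad (xi_deg p q i) x z) =
        A.zero_cls (xi_deg p q i)"
      using primitive_with_zero_class[OF g x(1)] .
    have "M.dd (xi_deg p q i) (M.ad (xi_deg p q i) x z) = M.dd (xi_deg p q i) x"
      using x(1) z(1) by (simp add: M.Z_iff M.d_add M.d_closed)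
    thus ?thesis
      using x z by (intro exI[of _ "M.ad (xi_deg p q i) x z"]) (auto simp: M.Z_iff)
  qed
  then obtain \<xi> where "\<forall>i\<in>I. \<xi> i \<in> M.C (xi_deg p q i) \<and>
      M.dd (xi_deg p q i) (\<xi> i) = M.mu p (q i) a' (b' i) \<and>
      g (xi_deg p q i) (\<xi> i) = A.zero_cls (xi_deg p q i)"
    by (metis bchoice)
  thus ?thesis using that exact unfolding defining_system_def by blast
qed

text \<open>In \<open>H(A)\<close> every summand of the Massey sum contains a factor \<open>\<xi> j\<close> (here \<open>n \<ge> 2\<close>
  is used), so the image of the Massey sum vanishes and it is exact by injectivity.\<close>

lemma msum_exact_in_model:
  assumes g: "dga_hom M (cohom A) g" "quasi_iso M (cohom A) g"
    and p: "even p" and a': "a' \<in> M.C p" and sys: "defining_system M p q a' b' \<xi> (set js)"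
    and zero: "\<forall>j\<in>set js. g (xi_deg p q j) (\<xi> j) = A.zero_cls (xi_deg p q j)"
    and len: "2 \<le> length js"
  shows "msum M p q b' \<xi> js \<in> M.B (msum_deg p q js)"
proof -
  have g_zero: "g k (M.z0 k) = dzero A.H k" for k
    using M.hom_zero[OF g(1)] A.H_smul_0 by (simp add: A.H_zero)
  have "g (msum_deg p q js) (msum M p q b' \<xi> js)
      = msum A.H p q (\<lambda>j. g (q j) (b' j)) (\<lambda>j. g (xi_deg p q j) (\<xi> j)) js"
    using M.hom_msum[OF g(1) M.defining_system_C[OF sys] g_zero] .
  also have "\<dots> = msum A.H p q (\<lambda>j. g (q j) (b' j)) (\<lambda>j. A.zero_cls (xi_deg p q j)) js"
    using zero by (intro msum_cong) auto
  also have "\<dots> = A.zero_cls (msum_deg p q js)"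
    using len M.defining_system_C[OF sys] M.hom_C[OF g(1)] by (intro A.msum_H_zero) auto
  finally have "g (msum_deg p q js) (msum M p q b' \<xi> js) \<in> coboundaries A.H (msum_deg p q js)"
    by (simp add: A.H_coboundaries)
  thus ?thesis using M.msum_Z[OF p a' sys] g(2) unfolding quasi_iso_def by blast
qed


lemma massey_zero_of_exact_lift:
  assumes f: "dga_hom M A f" and p: "even p"
    and a': "a' \<in> M.Z p" "\<epsilon> \<in> A.C (p - 1)" "a = A.ad p (f p a') (A.dd (p - 1) \<epsilon>)"
    and b': "\<forall>i\<in>{1..n}. \<gamma> i \<in> A.C (q i - 1) \<and> b i = A.ad (q i) (f (q i) (b' i))
        (A.dd (q i - 1) (\<gamma> i))"
    and sys: "defining_system M p q a' b' \<xi> {1..n}"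
    and exact: "msum M p q b' \<xi> [1..<Suc n] \<in> M.B (msum_deg p q [1..<Suc n])"
  shows "A.zero_cls (massey_deg p n q) \<in> massey A p a n q b"
proof -
  let ?js = "[1..<Suc n]"
  have js: "set ?js = {1..n}" by (simp add: atLeastLessThanSuc_atLeastAtMost del: upt_Suc)
  have a'C: "a' \<in> M.C p" using a' by (simp add: M.Z_iff)
  have "f (msum_deg p q ?js) (msum M p q b' \<xi> ?js) \<in> A.B (msum_deg p q ?js)"
    using exact by (rule M.hom_B[OF f])
  hence "msum A p q (\<lambda>j. f (q j) (b' j)) (\<lambda>j. f (xi_deg p q j) (\<xi> j)) ?js \<in> A.B (msum_deg p q ?js)"
    using M.hom_msum[OF f _ M.hom_zero[OF f A.smul_zero]] M.defining_system_C[OF sys] js by simp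
  moreover have "\<forall>j\<in>set ?js. \<gamma> j \<in> A.C (q j - 1) \<and>
      b j = A.ad (q j) (f (q j) (b' j)) (A.dd (q j - 1) (\<gamma> j))"
    using b' js by simp
  ultimately obtain \<xi>A where sysA: "defining_system A p q a b \<xi>A (set ?js)"
    and exactA: "msum A p q b \<xi>A ?js \<in> A.B (msum_deg p q ?js)"
    using A.msum_exact_transfer[OF p M.hom_Z[OF f A.smul_zero a'(1)] a'(2,3)
        M.hom_defining_system[OF f A.smul_zero a'C sys[folded js]]] by blast
  show ?thesis using A.zero_cls_in_massey[OF sysA[unfolded js] exactA] .
qed

lemma formal_massey_zero:
  assumes f: "dga_hom M A f" "quasi_iso M A f"
    and g: "dga_hom M (cohom A) g" "quasi_iso M (cohom A) g"
    and n: "2 \<le> n" and p: "even p" and a: "a \<in> A.Z p"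
    and b: "\<forall>i\<in>{1..n}. b i \<in> A.Z (q i) \<and> A.mu p (q i) a (b i) \<in> A.B (p + q i)"
  shows "A.zero_cls (massey_deg p n q) \<in> massey A p a n q b"
proof -
  obtain a' \<epsilon> where a': "a' \<in> M.Z p" "\<epsilon> \<in> A.C (p - 1)" "a = A.ad p (f p a') (A.dd (p - 1) \<epsilon>)"
    using quasi_iso_lift[OF f(2) a] .
  obtain b' \<gamma> where b': "\<forall>i\<in>{1..n}. b' i \<in> M.Z (q i) \<and> \<gamma> i \<in> A.C (q i - 1) \<and>
      b i = A.ad (q i) (f (q i) (b' i)) (A.dd (q i - 1) (\<gamma> i))"
    using quasi_iso_lift_family[OF f(2), of "{1..n}" b q] b by blast
  have "\<forall>i\<in>{1..n}. b' i \<in> M.Z (q i) \<and> M.mu p (q i) a' (b' i) \<in> M.B (p + q i)"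
    using product_of_lifts_exact[OF f a'] b b' by blast
  then obtain \<xi> where sys: "defining_system M p q a' b' \<xi> {1..n}"
    and zero: "\<forall>i\<in>{1..n}. g (xi_deg p q i) (\<xi> i) = A.zero_cls (xi_deg p q i)"
    by (rule defining_system_with_zero_classes[OF g])
  have js: "set [1..<Suc n] = {1..n}" by (simp add: atLeastLessThanSuc_atLeastAtMost del: upt_Suc)
  have "msum M p q b' \<xi> [1..<Suc n] \<in> M.B (msum_deg p q [1..<Suc n])"
    using msum_exact_in_model[OF g p _ sys[folded js] zero[folded js]] a' n by (simp add: M.Z_iff)
  thus ?thesis using massey_zero_of_exact_lift[OF f(1) p a'] b' sys by blast
qed

end

theorem theorem2p10:
  fixes A :: "'a dga" and p :: int and a :: 'a and n :: nat
    and q :: "nat \<Rightarrow> int" and b :: "nat \<Rightarrow> 'a"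
  assumes "is_dga A"
    and "connected_dga A"
    and "n \<ge> 2"
    and "massey_data A p a n q b"
    and "nontrivial_massey A p a n q b"
  shows "\<not> formal TYPE('m) A"
proof
  assume "formal TYPE('m) A"
  then obtain M :: "'m dga" and f g where "minimal_model M A f"
    and g: "dga_hom M (cohom A) g" "quasi_iso M (cohom A) g"
    unfolding formal_def by blast
  then have f: "dga_hom M A f" "quasi_iso M A f" and "is_dga M"
    unfolding minimal_model_def minimal_dga_def by auto
  then interpret two_dgas M A
    using assms(1) by (simp add: two_dgas_def dg_algebra_iff_is_dga)
  have "even p" and "a \<in> A.Z p"
    and "\<forall>i\<in>{1..n}. b i \<in> A.Z (q i) \<and> A.mu p (q i) a (b i) \<in> A.B (p + q i)"
    using assms(4) unfolding massey_data_def by auto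
  with f g assms(3) have "A.zero_cls (massey_deg p n q) \<in> massey A p a n q b"
    by (intro formal_massey_zero)
  thus False using assms(5) unfolding nontrivial_massey_def by (simp add: A.H_zero)
qed

end
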